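(* If $A,B\in K(H)_+$ are positive compact operators, then $\operatorname{Adm}(A)=\operatorname{Adm}(B)$ if and only if $A$ and $B$ are Murray–von Neumann equivalent.
   Context: $\operatorname{Adm}(A)$ is the set of sequences $\xi\in\ell^\infty_+$ such that $A=\sum_j\xi_jP_j$ for some rank-one projections $P_j$ (series converging strongly if infinite). Two operators $A,B\in B(H)_+$ are Murray–von Neumann equivalent if $B=VAV^*$ for some partial isometry $V$ with $V^*V\ge R_A$ (equivalently $B=XX^*$, $A=X^*X$ for some $X\in B(H)$), where $R_A$ is the range projection of $A$. *)

theory Defs
  imports "HOL-Analysis.Analysis"
begin

text \<open>The library has no complex inner product spaces, so we introduce the class of
complex Hilbert spaces: a (real) Banach space equipped with a complex scalar
multiplication extending the real one, and a complex inner product (conjugate-linear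
in the first argument) inducing the norm.\<close>

class chilbert = banach +
  fixes scaleC :: "complex \<Rightarrow> 'a \<Rightarrow> 'a"
    and cinner :: "'a \<Rightarrow> 'a \<Rightarrow> complex"
  assumes scaleC_add_right: "scaleC c (x + y) = scaleC c x + scaleC c y"
    and scaleC_add_left: "scaleC (c + d) x = scaleC c x + scaleC d x"
    and scaleC_scaleC: "scaleC c (scaleC d x) = scaleC (c * d) x"
    and scaleC_one: "scaleC 1 x = x"
    and scaleR_scaleC: "scaleR r x = scaleC (complex_of_real r) x"
    and cinner_add_left: "cinner (x + y) z = cinner x z + cinner y z"
    and cinner_scaleC_left: "cinner (scaleC c x) y = cnj c * cinner x y"
    and cinner_commute: "cinner y x = cnj (cinner x y)"
    and cinner_self_norm: "cinner x x = complex_of_real ((norm x)\<^sup>2)"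

definition bounded_clinear :: "('a::chilbert \<Rightarrow> 'a) \<Rightarrow> bool" where
  "bounded_clinear T \<longleftrightarrow>
     (\<forall>x y. T (x + y) = T x + T y) \<and> (\<forall>c x. T (scaleC c x) = scaleC c (T x)) \<and>
     (\<exists>K. \<forall>x. norm (T x) \<le> norm x * K)"

text \<open>The Hilbert-space adjoint (exists and is unique for bounded operators by Riesz).\<close>
definition adj :: "('a::chilbert \<Rightarrow> 'a) \<Rightarrow> ('a \<Rightarrow> 'a)" where
  "adj T = (SOME S. \<forall>x y. cinner (T x) y = cinner x (S y))"

definition selfadjoint_op :: "('a::chilbert \<Rightarrow> 'a) \<Rightarrow> bool" where
  "selfadjoint_op T \<longleftrightarrow> (\<forall>x y. cinner (T x) y = cinner x (T y))"

text \<open>Positive operator: \<open>\<langle>x, A x\<rangle> \<ge> 0\<close> for all x (in a complex space this forces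
self-adjointness).\<close>
definition positive_op :: "('a::chilbert \<Rightarrow> 'a) \<Rightarrow> bool" where
  "positive_op A \<longleftrightarrow> bounded_clinear A \<and>
     (\<forall>x. Im (cinner x (A x)) = 0 \<and> Re (cinner x (A x)) \<ge> 0)"

definition op_le :: "('a::chilbert \<Rightarrow> 'a) \<Rightarrow> ('a \<Rightarrow> 'a) \<Rightarrow> bool" where
  "op_le S T \<longleftrightarrow> positive_op (\<lambda>x. T x - S x)"

definition compact_op :: "('a::chilbert \<Rightarrow> 'a) \<Rightarrow> bool" where
  "compact_op T \<longleftrightarrow> bounded_clinear T \<and> (\<forall>S. bounded S \<longrightarrow> compact (closure (T ` S)))"

definition projection_op :: "('a::chilbert \<Rightarrow> 'a) \<Rightarrow> bool" where
  "projection_op P \<longleftrightarrow> bounded_clinear P \<and> P \<circ> P = P \<and> selfadjoint_op P"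

definition rank_one_projection :: "('a::chilbert \<Rightarrow> 'a) \<Rightarrow> bool" where
  "rank_one_projection P \<longleftrightarrow> projection_op P \<and>
     (\<exists>e. e \<noteq> 0 \<and> range P = range (\<lambda>c. scaleC c e))"

definition range_proj :: "('a::chilbert \<Rightarrow> 'a) \<Rightarrow> ('a \<Rightarrow> 'a)" where
  "range_proj A = (THE R. projection_op R \<and> range R = closure (range A))"

definition partial_isometry :: "('a::chilbert \<Rightarrow> 'a) \<Rightarrow> bool" where
  "partial_isometry V \<longleftrightarrow> bounded_clinear V \<and>
     (\<forall>x. (\<forall>y. V y = 0 \<longrightarrow> cinner y x = 0) \<longrightarrow> norm (V x) = norm x)"

definition mvn_equiv :: "('a::chilbert \<Rightarrow> 'a) \<Rightarrow> ('a \<Rightarrow> 'a) \<Rightarrow> bool" where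
  "mvn_equiv A B \<longleftrightarrow> (\<exists>V. partial_isometry V \<and> op_le (range_proj A) (adj V \<circ> V) \<and>
     B = V \<circ> A \<circ> adj V)"

definition Adm :: "('a::chilbert \<Rightarrow> 'a) \<Rightarrow> (nat \<Rightarrow> real) set" where
  "Adm A = {\<xi>. (\<forall>j. \<xi> j \<ge> 0) \<and> bounded (range \<xi>) \<and>
     (\<exists>P. (\<forall>j. rank_one_projection (P j)) \<and>
          (\<forall>x. (\<lambda>j. scaleR (\<xi> j) (P j x)) sums A x))}"

end

theory Submission
  imports Defs
begin

text \<open>Repeatedly splitting off the top of the quadratic form \<open>\<langle>x, A x\<rangle>\<close> yields a spectral
  decomposition \<open>A = \<Sum>\<^sub>j \<lambda>\<^sub>j e\<^sub>j e\<^sub>j\<^sup>*\<close> of a positive compact operator, with \<open>\<lambda>\<close> decreasing to \<open>0\<close>;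
  in particular \<open>\<lambda> \<in> Adm(A)\<close>. Every \<open>\<xi> \<in> Adm(A)\<close> is majorized by \<open>\<lambda>\<close>,
  \<open>\<Sum>\<^sub>j\<^sub><\<^sub>k \<xi>\<^sub>j \<le> \<Sum>\<^sub>j\<^sub><\<^sub>k \<lambda>\<^sub>j\<close>, because the weights \<open>\<xi>\<^sub>j |\<langle>e\<^sub>i, q\<^sub>j\<rangle>|\<^sup>2 / \<lambda>\<^sub>i\<close> form a doubly
  substochastic matrix. Hence \<open>Adm(A) = Adm(B)\<close> forces \<open>A\<close> and \<open>B\<close> to have the same eigenvalue
  sequence, and the partial isometry sending the eigenvectors of \<open>A\<close> to those of \<open>B\<close> is a
  Murray--von Neumann equivalence. Conversely, such an equivalence \<open>V\<close> is isometric on the range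
  of \<open>A\<close>, so it carries the eigenvectors of \<open>A\<close> to eigenvectors of \<open>B\<close> with the same
  eigenvalues, and the partial isometry between the two eigenbases transports every decomposition
  \<open>A = \<Sum>\<^sub>j \<xi>\<^sub>j q\<^sub>j q\<^sub>j\<^sup>*\<close> to a decomposition of \<open>B\<close>.\<close>

lemma cinner_add_right: "cinner x (y + z) = cinner x y + cinner (x::'a::chilbert) z"
  by (metis cinner_commute cinner_add_left complex_cnj_add)

lemma cinner_scaleC_right: "cinner x (scaleC c y) = c * cinner (x::'a::chilbert) y"
  by (metis cinner_commute cinner_scaleC_left complex_cnj_cnj complex_cnj_mult)

lemma cinner_zero_left[simp]: "cinner 0 (x::'a::chilbert) = 0"
  using cinner_add_left[of 0 0 x] by simp

lemma cinner_zero_right[simp]: "cinner (x::'a::chilbert) 0 = 0"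
  using cinner_add_right[of x 0 0] by simp

lemma cinner_minus_left[simp]: "cinner (- x) (y::'a::chilbert) = - cinner x y"
  using cinner_add_left[of x "-x" y] by (simp add: eq_neg_iff_add_eq_0 add.commute)

lemma cinner_minus_right[simp]: "cinner x (- y::'a::chilbert) = - cinner x y"
  using cinner_add_right[of x y "-y"] by (simp add: eq_neg_iff_add_eq_0 add.commute)

lemma cinner_diff_left: "cinner (x - y) (z::'a::chilbert) = cinner x z - cinner y z"
  using cinner_add_left[of x "-y" z] by simp

lemma cinner_diff_right: "cinner x (y - z::'a::chilbert) = cinner x y - cinner x z"
  using cinner_add_right[of x y "-z"] by simp

lemma scaleC_zero_left[simp]: "scaleC 0 (x::'a::chilbert) = 0"
  using scaleR_scaleC[of 0 x] by simp

lemma scaleC_zero_right[simp]: "scaleC c (0::'a::chilbert) = 0"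
  using scaleC_add_right[of c 0 0] by simp

lemma scaleC_minus_right: "scaleC c (- x::'a::chilbert) = - scaleC c x"
  using scaleC_add_right[of c x "-x"] by (simp add: eq_neg_iff_add_eq_0 add.commute)

lemma scaleC_minus_left: "scaleC (- c) (x::'a::chilbert) = - scaleC c x"
  using scaleC_add_left[of c "-c" x] by (simp add: eq_neg_iff_add_eq_0 add.commute)

lemma scaleC_diff_right: "scaleC c (x - y::'a::chilbert) = scaleC c x - scaleC c y"
  using scaleC_add_right[of c x "-y"] by (simp add: scaleC_minus_right)

lemma cinner_scaleR_left: "cinner (scaleR r x) (y::'a::chilbert) = complex_of_real r * cinner x y"
  by (simp add: scaleR_scaleC cinner_scaleC_left)

lemma cinner_scaleR_right: "cinner x (scaleR r y::'a::chilbert) = complex_of_real r * cinner x y"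
  by (simp add: scaleR_scaleC cinner_scaleC_right)

lemma Re_cinner_self: "Re (cinner x (x::'a::chilbert)) = (norm x)^2"
  by (simp add: cinner_self_norm)

lemma Im_cinner_self: "Im (cinner x (x::'a::chilbert)) = 0"
  by (simp add: cinner_self_norm)

lemma cinner_eq_zero_iff: "cinner x x = 0 \<longleftrightarrow> x = (0::'a::chilbert)"
  by (simp add: cinner_self_norm)

lemma norm_scaleC: "norm (scaleC c (x::'a::chilbert)) = cmod c * norm x"
proof -
  have "cinner (scaleC c x) (scaleC c x) = cnj c * c * cinner x x"
    by (simp add: cinner_scaleC_left cinner_scaleC_right)
  also have "cnj c * c = complex_of_real ((cmod c)^2)"
    by (metis complex_norm_square mult.commute)
  also have "complex_of_real ((cmod c)^2) * cinner x x = complex_of_real ((cmod c)^2 * (norm x)^2)"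
    by (simp add: cinner_self_norm)
  finally have "complex_of_real ((norm (scaleC c x))^2) = complex_of_real ((cmod c * norm x)^2)"
    by (simp only: cinner_self_norm power_mult_distrib)
  then have "(norm (scaleC c x))^2 = (cmod c * norm x)^2" using of_real_eq_iff by blast
  then show ?thesis by (simp add: power2_eq_iff_nonneg)
qed

lemma norm_add_sq: "(norm (x + y))^2 = (norm x)^2 + (norm (y::'a::chilbert))^2 + 2 * Re (cinner x y)"
proof -
  have "cinner (x+y) (x+y) = cinner x x + cinner y y + (cinner x y + cinner y x)"
    by (simp add: cinner_add_left cinner_add_right)
  moreover have "cinner x y + cinner y x = complex_of_real (2 * Re (cinner x y))"
    by (metis cinner_commute complex_add_cnj)
  ultimately have "complex_of_real ((norm (x+y))^2) = complex_of_real ((norm x)^2 + (norm y)^2 + 2 * Re (cinner x y))"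
    by (simp add: cinner_self_norm)
  then show ?thesis using of_real_eq_iff by blast
qed

lemma norm_diff_sq: "(norm (x - y))^2 = (norm x)^2 + (norm (y::'a::chilbert))^2 - 2 * Re (cinner x y)"
  using norm_add_sq[of x "-y"] by simp

lemma cinner_cauchy_schwarz: "cmod (cinner x y) \<le> norm x * norm (y::'a::chilbert)"
proof (cases "y = 0")
  case True then show ?thesis by simp
next
  case False
  define t where "t = cinner y x / complex_of_real ((norm y)^2)"
  have ny: "norm y > 0" using False by simp
  have "0 \<le> (norm (x - scaleC t y))^2" by simp
  also have "\<dots> = (norm x)^2 + (cmod t * norm y)^2 - 2 * Re (cinner x (scaleC t y))"
    by (simp add: norm_diff_sq norm_scaleC)
  also have "cinner x (scaleC t y) = t * cinner x y" by (simp add: cinner_scaleC_right)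
  also have "t * cinner x y = complex_of_real ((cmod (cinner x y))^2 / (norm y)^2)"
  proof -
    have "t * cinner x y = (cinner x y * cnj (cinner x y)) / complex_of_real ((norm y)^2)"
      unfolding t_def using cinner_commute[of y x] by (simp add: mult.commute)
    also have "cinner x y * cnj (cinner x y) = complex_of_real ((cmod (cinner x y))^2)"
      by (rule complex_norm_square[symmetric])
    finally show ?thesis by simp
  qed
  also have "cmod t = cmod (cinner x y) / (norm y)^2"
    unfolding t_def using cinner_commute[of y x] ny by (simp add: norm_divide norm_power)
  finally have "0 \<le> (norm x)^2 - (cmod (cinner x y))^2 / (norm y)^2"
    using ny by (simp add: power_divide power2_eq_square field_simps)
  then have "(cmod (cinner x y))^2 \<le> (norm x * norm y)^2"
    using ny by (simp add: field_simps power_mult_distrib)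
  then show ?thesis by (simp add: power2_le_iff_abs_le)
qed

lemma mult_cnj_cmod_sq: "z * cnj z = (complex_of_real (cmod z))^2"
  by (metis complex_norm_square of_real_power)

lemma cnj_mult_cmod_sq: "cnj z * z = (complex_of_real (cmod z))^2"
  by (metis mult_cnj_cmod_sq mult.commute)

lemma cmod_cinner_commute: "cmod (cinner x y) = cmod (cinner y (x::'a::chilbert))"
  by (metis cinner_commute complex_mod_cnj)

lemma parallelogram_law:
  "(norm (u + v))^2 + (norm (u - v))^2 = 2 * (norm u)^2 + 2 * (norm (v::'a::chilbert))^2"
  using norm_add_sq[of u v] norm_diff_sq[of u v] by simp

lemma cinner_ext_left: "(\<And>z. cinner z x = cinner z y) \<Longrightarrow> x = (y::'a::chilbert)"
  by (metis cinner_diff_right cinner_eq_zero_iff eq_iff_diff_eq_0)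

lemma cinner_ext_right: "(\<And>z. cinner x z = cinner y z) \<Longrightarrow> x = (y::'a::chilbert)"
  by (metis cinner_diff_left cinner_eq_zero_iff eq_iff_diff_eq_0)

lemma bounded_linear_cinner_right: "bounded_linear (\<lambda>x. cinner a (x::'a::chilbert))"
  apply (rule bounded_linear_intro[where K="norm a"])
    apply (simp add: cinner_add_right)
   apply (simp add: cinner_scaleR_right scaleR_conv_of_real)
  by (metis cinner_cauchy_schwarz mult.commute)

lemma bounded_linear_cinner_left: "bounded_linear (\<lambda>x. cinner (x::'a::chilbert) a)"
  apply (rule bounded_linear_intro[where K="norm a"])
    apply (simp add: cinner_add_left)
   apply (simp add: cinner_scaleR_left scaleR_conv_of_real)
  by (metis cinner_cauchy_schwarz)

lemma bounded_linear_scaleC_left: "bounded_linear (\<lambda>c. scaleC c (e::'a::chilbert))"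
  apply (rule bounded_linear_intro[where K="norm e"])
    apply (simp add: scaleC_add_left)
   apply (simp add: scaleC_scaleC[symmetric] scaleR_scaleC scaleR_conv_of_real)
  by (simp add: norm_scaleC)

lemma bounded_linear_scaleC_right: "bounded_linear (\<lambda>x. scaleC c (x::'a::chilbert))"
  apply (rule bounded_linear_intro[where K="cmod c"])
    apply (simp add: scaleC_add_right)
   apply (simp add: scaleC_scaleC scaleR_scaleC mult.commute)
  by (simp add: norm_scaleC mult.commute)

lemma cinner_sum_right: "cinner x (sum g S) = (\<Sum>l\<in>S. cinner (x::'a::chilbert) (g l))"
  by (induction S rule: infinite_finite_induct) (auto simp: cinner_add_right)

lemma cinner_sum_left: "cinner (sum g S) x = (\<Sum>l\<in>S. cinner (g l) (x::'a::chilbert))"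
  by (induction S rule: infinite_finite_induct) (auto simp: cinner_add_left)

lemma bounded_clinear_bounded_linear: "bounded_clinear T \<Longrightarrow> bounded_linear T"
  unfolding bounded_clinear_def
  apply (elim conjE exE)
  apply (rule bounded_linear_intro)
  by (auto simp: scaleR_scaleC)

lemma bounded_clinearD:
  assumes "bounded_clinear T"
  shows "T (x + y) = T x + T y" "T (scaleC c x) = scaleC c (T x)"
  using assms unfolding bounded_clinear_def by auto

lemma bounded_clinear_zero: "bounded_clinear T \<Longrightarrow> T 0 = 0"
  using bounded_clinearD(2)[of T 0 0] by simp

lemma bounded_clinear_minus: "bounded_clinear T \<Longrightarrow> T (- x) = - T x"
  using bounded_clinearD(2)[of T "-1" x] by (simp add: scaleC_minus_left scaleC_one)

lemma bounded_clinear_diff: "bounded_clinear T \<Longrightarrow> T (x - y) = T x - T y"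
  using bounded_clinearD(1)[of T x "-y"] bounded_clinear_minus[of T y] by simp

lemma bounded_clinear_scaleR: "bounded_clinear T \<Longrightarrow> T (scaleR r x) = scaleR r (T x)"
  by (simp add: scaleR_scaleC bounded_clinearD(2))

lemma bounded_clinear_sum: "bounded_clinear T \<Longrightarrow> T (sum f A) = sum (\<lambda>i. T (f i)) A"
  using linear_sum[OF bounded_linear.linear[OF bounded_clinear_bounded_linear]] by blast

lemma bounded_clinear_sums: "bounded_clinear T \<Longrightarrow> f sums s \<Longrightarrow> (\<lambda>n. T (f n)) sums T s"
  using bounded_linear.sums[OF bounded_clinear_bounded_linear] by blast

lemma bounded_clinear_tendsto: "bounded_clinear T \<Longrightarrow> X \<longlonglongrightarrow> l \<Longrightarrow> (\<lambda>n. T (X n)) \<longlonglongrightarrow> T l"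
  using bounded_linear.tendsto[OF bounded_clinear_bounded_linear] by blast

lemma bounded_clinear_pos_bound: "bounded_clinear T \<Longrightarrow> \<exists>K>0. \<forall>x. norm (T x) \<le> norm x * K"
  using bounded_linear.pos_bounded[OF bounded_clinear_bounded_linear] by blast

lemma positive_opD: "positive_op T \<Longrightarrow> bounded_clinear T"
  "positive_op T \<Longrightarrow> Im (cinner x (T x)) = 0"
  "positive_op T \<Longrightarrow> Re (cinner x (T x)) \<ge> 0"
  unfolding positive_op_def by auto

lemma positive_op_selfadjoint:
  assumes "positive_op T"
  shows "cinner (T x) y = cinner x (T y)"
proof -
  have L: "bounded_clinear T" using positive_opD(1)[OF assms] .
  have e1: "cinner (x+y) (T (x+y)) = cinner x (T x) + cinner y (T y) + (cinner x (T y) + cinner y (T x))"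
    by (simp add: bounded_clinearD(1)[OF L] cinner_add_left cinner_add_right)
  have i1: "Im (cinner x (T y) + cinner y (T x)) = 0"
    using e1 positive_opD(2)[OF assms, of "x+y"] positive_opD(2)[OF assms, of x] positive_opD(2)[OF assms, of y] by simp
  have e2: "cinner (x + scaleC \<i> y) (T (x + scaleC \<i> y)) = cinner x (T x) + cinner y (T y) + (\<i> * cinner x (T y) - \<i> * cinner y (T x))"
    by (simp add: bounded_clinearD[OF L] cinner_add_left cinner_add_right cinner_scaleC_left cinner_scaleC_right algebra_simps)
  have i2: "Re (cinner x (T y)) - Re (cinner y (T x)) = 0"
    using e2 positive_opD(2)[OF assms, of "x+scaleC \<i> y"] positive_opD(2)[OF assms, of x] positive_opD(2)[OF assms, of y] by simp
  have "cinner x (T y) = cnj (cinner y (T x))"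
    using i1 i2 by (simp add: complex_eq_iff)
  then show ?thesis by (metis cinner_commute)
qed

definition qform :: "('a::chilbert \<Rightarrow> 'a) \<Rightarrow> 'a \<Rightarrow> real" where
  "qform T x = Re (cinner x (T x))"

definition qform_sup :: "('a::chilbert \<Rightarrow> 'a) \<Rightarrow> real" where
  "qform_sup T = Sup (qform T ` {x. norm x = 1})"

lemma qform_nonneg: "positive_op T \<Longrightarrow> qform T x \<ge> 0"
  unfolding qform_def using positive_opD(3) by blast

lemma qform_scaleR: "bounded_clinear T \<Longrightarrow> qform T (scaleR r x) = r^2 * qform T x"
  unfolding qform_def by (simp add: bounded_clinear_scaleR cinner_scaleR_left cinner_scaleR_right power2_eq_square)

lemma qform_le_norm_sq: "bounded_clinear T \<Longrightarrow> \<exists>K. \<forall>x. qform T x \<le> K * (norm x)^2"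
proof -
  assume L: "bounded_clinear T"
  obtain K where K: "\<forall>x. norm (T x) \<le> norm x * K" using bounded_clinear_pos_bound[OF L] by blast
  have "qform T x \<le> K * (norm x)^2" for x
  proof -
    have "qform T x \<le> cmod (cinner x (T x))" unfolding qform_def by (rule complex_Re_le_cmod)
    also have "\<dots> \<le> norm x * norm (T x)" by (rule cinner_cauchy_schwarz)
    also have "\<dots> \<le> norm x * (norm x * K)" using K by (simp add: mult_left_mono)
    finally show ?thesis by (simp add: power2_eq_square algebra_simps)
  qed
  then show ?thesis by blast
qed

lemma bdd_above_qform_sphere: "bounded_clinear T \<Longrightarrow> bdd_above (qform T ` {x. norm x = 1})"
proof -
  assume L: "bounded_clinear T"
  obtain K where K: "\<forall>x. qform T x \<le> K * (norm x)^2" using qform_le_norm_sq[OF L] by blast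
  have "\<forall>y\<in>qform T ` {x. norm x = 1}. y \<le> K"
  proof
    fix y assume "y \<in> qform T ` {x. norm x = 1}"
    then obtain x where "norm x = 1" "y = qform T x" by blast
    then show "y \<le> K" using K[rule_format, of x] by simp
  qed
  then show ?thesis unfolding bdd_above_def by blast
qed

lemma qform_le_qform_sup_sphere: "bounded_clinear T \<Longrightarrow> norm x = 1 \<Longrightarrow> qform T x \<le> qform_sup T"
  unfolding qform_sup_def by (rule cSup_upper) (auto intro: bdd_above_qform_sphere)

lemma qform_sup_nonneg: "positive_op T \<Longrightarrow> norm (u::'a::chilbert) = 1 \<Longrightarrow> 0 \<le> qform_sup (T::'a \<Rightarrow> 'a)"
  using qform_le_qform_sup_sphere[of T u] qform_nonneg[of T u] positive_opD(1)[of T] by linarith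

lemma qform_le_qform_sup: 
  assumes "positive_op T"
  shows "qform T x \<le> qform_sup T * (norm x)^2"
proof (cases "x = 0")
  case True
  then show ?thesis using bounded_clinear_zero[OF positive_opD(1)[OF assms]] by (simp add: qform_def)
next
  case False
  define u where "u = scaleR (1 / norm x) x"
  have nu: "norm u = 1" using False by (simp add: u_def)
  have xu: "x = scaleR (norm x) u" using False by (simp add: u_def)
  have "qform T x = (norm x)^2 * qform T u"
    by (subst xu, rule qform_scaleR[OF positive_opD(1)[OF assms]])
  also have "\<dots> \<le> (norm x)^2 * qform_sup T"
    using qform_le_qform_sup_sphere[OF positive_opD(1)[OF assms] nu] by (simp add: mult_left_mono)
  finally show ?thesis by (simp add: mult.commute)
qed

lemma qform_polarization:
  assumes "positive_op T"
  shows "qform T (x + y) - qform T (x - y) = 4 * Re (cinner y (T x))"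
proof -
  have L: "bounded_clinear T" using positive_opD(1)[OF assms] .
  have "cinner x (T y) = cnj (cinner y (T x))"
    using positive_op_selfadjoint[OF assms, of x y] cinner_commute by metis
  then show ?thesis unfolding qform_def
    by (simp add: bounded_clinearD(1)[OF L] bounded_clinear_diff[OF L] cinner_add_left cinner_add_right
        cinner_diff_left cinner_diff_right)
qed

text \<open>Polarization with \<open>y = (\<parallel>x\<parallel> / \<parallel>T x\<parallel>) T x\<close>.\<close>
lemma norm_apply_le_qform_sup:
  assumes "positive_op T"
  shows "norm (T x) \<le> qform_sup T * norm x"
proof (cases "T x = 0")
  case True
  have "x \<noteq> 0 \<Longrightarrow> 0 \<le> qform_sup T"
    using qform_sup_nonneg[OF assms, of "scaleR (1/norm x) x"] by simp
  then show ?thesis using True bounded_clinear_zero[OF positive_opD(1)[OF assms]] by (cases "x = 0") auto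
next
  case False
  have L: "bounded_clinear T" using positive_opD(1)[OF assms] .
  have x0: "x \<noteq> 0" using False bounded_clinear_zero[OF L] by auto
  define t where "t = norm x / norm (T x)"
  have tpos: "t > 0" using False x0 by (simp add: t_def)
  define y where "y = scaleR t (T x)"
  have ny: "norm y = norm x" using False tpos by (simp add: y_def t_def)
  have "Re (cinner y (T x)) = t * (norm (T x))^2"
    by (simp add: y_def cinner_scaleR_left Re_cinner_self)
  also have "\<dots> = norm x * norm (T x)" using False by (simp add: t_def power2_eq_square)
  finally have r: "Re (cinner y (T x)) = norm x * norm (T x)" .
  have "4 * (norm x * norm (T x)) = qform T (x + y) - qform T (x - y)"
    using qform_polarization[OF assms, of x y] r by simp
  also have "\<dots> \<le> qform T (x + y)" using qform_nonneg[OF assms, of "x - y"] by simp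
  also have "\<dots> \<le> qform_sup T * (norm (x + y))^2" by (rule qform_le_qform_sup[OF assms])
  also have "\<dots> \<le> qform_sup T * (2 * norm x)^2"
  proof -
    have "norm (x + y) \<le> 2 * norm x" using norm_triangle_ineq[of x y] ny by simp
    then have "(norm (x+y))^2 \<le> (2 * norm x)^2" by (rule power_mono) simp
    moreover have "0 \<le> qform_sup T" using qform_sup_nonneg[OF assms, of "scaleR (1/norm x) x"] x0 by simp
    ultimately show ?thesis by (simp add: mult_left_mono)
  qed
  finally have "4 * (norm x * norm (T x)) \<le> 4 * (norm x * (qform_sup T * norm x))"
    by (simp add: power2_eq_square algebra_simps)
  then have "norm x * norm (T x) \<le> norm x * (qform_sup T * norm x)" by simp
  then show ?thesis using x0 by (simp add: mult.commute)
qed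

definition butterfly :: "'a::chilbert \<Rightarrow> 'a \<Rightarrow> 'a" where
  "butterfly e x = scaleC (cinner e x) e"

lemma bounded_clinear_butterfly: "bounded_clinear (butterfly e)"
  unfolding bounded_clinear_def butterfly_def
proof (intro conjI allI exI)
  show "scaleC (cinner e (x + y)) e = scaleC (cinner e x) e + scaleC (cinner e y) e" for x y
    by (simp add: cinner_add_right scaleC_add_left)
  show "scaleC (cinner e (scaleC c x)) e = scaleC c (scaleC (cinner e x) e)" for c x
    by (simp add: cinner_scaleC_right scaleC_scaleC)
  show "norm (scaleC (cinner e x) e) \<le> norm x * (norm e * norm e)" for x
    using cinner_cauchy_schwarz[of e x] mult_left_mono[of "cmod (cinner e x)" "norm e * norm x" "norm e"]
    by (simp add: norm_scaleC algebra_simps)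
qed

lemma butterfly_idem: "norm e = 1 \<Longrightarrow> butterfly e (butterfly e x) = butterfly e x"
  unfolding butterfly_def by (simp add: cinner_scaleC_right cinner_self_norm)

lemma butterfly_selfadjoint: "cinner (butterfly e x) y = cinner x (butterfly e y)"
  unfolding butterfly_def
  by (metis cinner_commute cinner_scaleC_left cinner_scaleC_right mult.commute)

lemma rank_one_projection_butterfly: 
  assumes "norm e = 1" shows "rank_one_projection (butterfly e)"
  unfolding rank_one_projection_def projection_op_def selfadjoint_op_def
proof (intro conjI exI)
  show "bounded_clinear (butterfly e)" by (rule bounded_clinear_butterfly)
  show "butterfly e \<circ> butterfly e = butterfly e" using butterfly_idem[OF assms] by auto
  show "\<forall>x y. cinner (butterfly e x) y = cinner x (butterfly e y)" using butterfly_selfadjoint by blast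
  show "e \<noteq> 0" using assms by auto
  show "range (butterfly e) = range (\<lambda>c. scaleC c e)"
  proof
    show "range (butterfly e) \<subseteq> range (\<lambda>c. scaleC c e)" unfolding butterfly_def by auto
    show "range (\<lambda>c. scaleC c e) \<subseteq> range (butterfly e)"
    proof
      fix z assume "z \<in> range (\<lambda>c. scaleC c e)"
      then obtain c where "z = scaleC c e" by blast
      then have "z = butterfly e z" using assms unfolding butterfly_def
        by (simp add: cinner_scaleC_right cinner_self_norm)
      then show "z \<in> range (butterfly e)" by (metis rangeI)
    qed
  qed
qed

lemma rank_one_projection_ex_butterfly:
  assumes "rank_one_projection P"
  shows "\<exists>e. norm e = 1 \<and> P = butterfly e"
proof -
  obtain f where f: "f \<noteq> 0" "range P = range (\<lambda>c. scaleC c f)" and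
    L: "bounded_clinear P" and idem: "P \<circ> P = P" and sa: "\<forall>x y. cinner (P x) y = cinner x (P y)"
    using assms unfolding rank_one_projection_def projection_op_def selfadjoint_op_def by blast
  define e where "e = scaleC (complex_of_real (1 / norm f)) f"
  have ne: "norm e = 1" using f(1) by (simp add: e_def norm_scaleC norm_divide)
  have "e \<in> range P" using f(2) e_def by auto
  then obtain z where "e = P z" by blast
  then have Pe: "P e = e" using idem by (metis comp_apply)
  have rng: "\<And>x. \<exists>c. P x = scaleC c e"
  proof -
    fix x
    have "P x \<in> range (\<lambda>c. scaleC c f)" using f(2) by blast
    then obtain c where "P x = scaleC c f" by blast
    moreover have "f = scaleC (complex_of_real (norm f)) e" using f(1)
      by (simp add: e_def scaleC_scaleC scaleC_one)
    ultimately have "P x = scaleC (c * complex_of_real (norm f)) e" by (metis scaleC_scaleC)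
    then show "\<exists>c. P x = scaleC c e" by blast
  qed
  have "P x = butterfly e x" for x
  proof -
    obtain c where c: "P x = scaleC c e" using rng by blast
    have "cinner e (P x) = cinner (P e) x" using sa by simp
    then have "c = cinner e x" using c Pe ne by (simp add: cinner_scaleC_right cinner_self_norm)
    then show ?thesis using c unfolding butterfly_def by simp
  qed
  then show ?thesis using ne by blast
qed

lemma bounded_clinear_sub_butterfly: "bounded_clinear T \<Longrightarrow> bounded_clinear (\<lambda>x. T x - scaleR c (butterfly e x))"
proof -
  assume L: "bounded_clinear T"
  have L2: "bounded_clinear (butterfly e)" by (rule bounded_clinear_butterfly)
  obtain K1 where K1: "\<forall>x. norm (T x) \<le> norm x * K1" using L unfolding bounded_clinear_def by blast
  obtain K2 where K2: "\<forall>x. norm (butterfly e x) \<le> norm x * K2" using L2 unfolding bounded_clinear_def by blast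
  show ?thesis unfolding bounded_clinear_def
  proof (intro conjI allI exI)
    show "T (x + y) - scaleR c (butterfly e (x + y)) = T x - scaleR c (butterfly e x) + (T y - scaleR c (butterfly e y))" for x y
      by (simp add: bounded_clinearD(1)[OF L] bounded_clinearD(1)[OF L2] scaleR_add_right)
    show "T (scaleC d x) - scaleR c (butterfly e (scaleC d x)) = scaleC d (T x - scaleR c (butterfly e x))" for d x
      by (simp add: bounded_clinearD(2)[OF L] bounded_clinearD(2)[OF L2] scaleC_diff_right scaleR_scaleC scaleC_scaleC mult.commute)
    show "norm (T x - scaleR c (butterfly e x)) \<le> norm x * (K1 + \<bar>c\<bar> * K2)" for x
    proof -
      have "norm (T x - scaleR c (butterfly e x)) \<le> norm (T x) + \<bar>c\<bar> * norm (butterfly e x)"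
        using norm_triangle_ineq4[of "T x" "scaleR c (butterfly e x)"] by simp
      also have "\<dots> \<le> norm x * K1 + \<bar>c\<bar> * (norm x * K2)"
        using K1 K2 by (intro add_mono mult_left_mono) auto
      finally show ?thesis by (simp add: algebra_simps)
    qed
  qed
qed

lemma cinner_butterfly_self: "cinner x (butterfly e x) = complex_of_real ((cmod (cinner e x))^2)"
  unfolding butterfly_def using cinner_commute[of x e]
  by (simp add: cinner_scaleC_right mult_cnj_cmod_sq cnj_mult_cmod_sq mult.commute)

lemma qform_sub_butterfly: "qform (\<lambda>x. T x - scaleR c (butterfly e x)) x = qform T x - c * (cmod (cinner e x))^2"
  unfolding qform_def by (simp add: cinner_diff_right cinner_scaleR_right cinner_butterfly_self)

section \<open>Spectral theorem for positive compact operators\<close>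

definition seq_compact_op :: "('a::chilbert \<Rightarrow> 'a) \<Rightarrow> bool" where
  "seq_compact_op T \<longleftrightarrow> (\<forall>x::nat \<Rightarrow> 'a. bounded (range x) \<longrightarrow> (\<exists>l r. strict_mono r \<and> (\<lambda>n. T (x (r n))) \<longlonglongrightarrow> l))"

lemma compact_op_seq_compact_op: 
  assumes "compact_op T" shows "seq_compact_op T"
  unfolding seq_compact_op_def
proof (intro allI impI)
  fix x :: "nat \<Rightarrow> 'a" assume b: "bounded (range x)"
  have "compact (closure (T ` range x))" using assms b unfolding compact_op_def by simp
  then have sc: "seq_compact (closure (T ` range x))" by (rule compact_imp_seq_compact)
  have "\<forall>n. T (x n) \<in> closure (T ` range x)" by (simp add: closure_def)
  then obtain l r where "strict_mono r" "((\<lambda>n. T (x n)) \<circ> r) \<longlonglongrightarrow> l"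
    using sc unfolding seq_compact_def by meson
  then show "\<exists>l r. strict_mono r \<and> (\<lambda>n. T (x (r n))) \<longlonglongrightarrow> l" by (auto simp: o_def)
qed

lemma seq_compact_op_sub_butterfly:
  assumes "seq_compact_op T"
  shows "seq_compact_op (\<lambda>x. T x - scaleR c (butterfly e x))"
  unfolding seq_compact_op_def
proof (intro allI impI)
  fix x :: "nat \<Rightarrow> 'a" assume b: "bounded (range x)"
  obtain l1 r1 where r1: "strict_mono r1" "(\<lambda>n. T (x (r1 n))) \<longlonglongrightarrow> l1"
    using assms b unfolding seq_compact_op_def by blast
  obtain B where B: "\<forall>n. norm (x n) \<le> B" using b unfolding bounded_iff by blast
  have "bounded (range (\<lambda>n. cinner e (x (r1 n))))"
    unfolding bounded_iff
  proof (intro exI allI ballI)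
    fix z assume "z \<in> range (\<lambda>n. cinner e (x (r1 n)))"
    then obtain n where "z = cinner e (x (r1 n))" by blast
    then have "norm z \<le> norm e * norm (x (r1 n))" using cinner_cauchy_schwarz by simp
    also have "\<dots> \<le> norm e * B" using B by (simp add: mult_left_mono)
    finally show "norm z \<le> norm e * B" .
  qed
  then obtain l2 r2 where r2: "strict_mono r2" "((\<lambda>n. cinner e (x (r1 n))) \<circ> r2) \<longlonglongrightarrow> l2"
    using bounded_imp_convergent_subsequence by blast
  have c1: "(\<lambda>n. T (x (r1 (r2 n)))) \<longlonglongrightarrow> l1"
    using LIMSEQ_subseq_LIMSEQ[OF r1(2) r2(1)] by (simp add: o_def)
  have c2: "(\<lambda>n. scaleC (cinner e (x (r1 (r2 n)))) e) \<longlonglongrightarrow> scaleC l2 e"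
    using bounded_linear.tendsto[OF bounded_linear_scaleC_left r2(2)] by (simp add: o_def)
  have "(\<lambda>n. T (x (r1 (r2 n))) - scaleR c (butterfly e (x (r1 (r2 n))))) \<longlonglongrightarrow> l1 - scaleR c (scaleC l2 e)"
    unfolding butterfly_def by (intro tendsto_intros c1 c2)
  moreover have "strict_mono (r1 \<circ> r2)" using r1(1) r2(1) by (rule strict_mono_o)
  ultimately show "\<exists>l r. strict_mono r \<and> (\<lambda>n. T (x (r n)) - scaleR c (butterfly e (x (r n)))) \<longlonglongrightarrow> l"
    by (auto simp: o_def)
qed

lemma qform_sup_sequence:
  fixes T :: "'a::chilbert \<Rightarrow> 'a"
  assumes T: "bounded_clinear T" and u: "norm (u::'a) = 1"
  obtains x where "\<And>n. norm (x n) = 1" and "(\<lambda>n. qform T (x n)) \<longlonglongrightarrow> qform_sup T"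
proof -
  have ne: "qform T ` {x. norm x = 1} \<noteq> {}" using u by blast
  have "\<exists>x. norm x = 1 \<and> qform_sup T - 1 / real (Suc n) < qform T x" for n
  proof -
    have "qform_sup T - 1 / real (Suc n) < Sup (qform T ` {x. norm x = 1})"
      by (simp add: qform_sup_def)
    then show ?thesis using less_cSup_iff[OF ne bdd_above_qform_sphere[OF T]] by blast
  qed
  then obtain x where x: "\<And>n. norm (x n) = 1"
    and below: "\<And>n. qform_sup T - 1 / real (Suc n) < qform T (x n)"
    by metis
  have "\<forall>\<^sub>F n in sequentially. qform_sup T - 1 / real (Suc n) \<le> qform T (x n)"
    using below by (intro always_eventually allI less_imp_le)
  moreover have "\<forall>\<^sub>F n in sequentially. qform T (x n) \<le> qform_sup T"
    using qform_le_qform_sup_sphere[OF T x] by (intro always_eventually allI)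
  moreover have "(\<lambda>n. qform_sup T - 1 / real (Suc n)) \<longlonglongrightarrow> qform_sup T"
    using tendsto_diff[OF tendsto_const LIMSEQ_inverse_real_of_nat, of "qform_sup T"]
    by (simp add: inverse_eq_divide)
  ultimately have "(\<lambda>n. qform T (x n)) \<longlonglongrightarrow> qform_sup T"
    by (rule tendsto_sandwich[OF _ _ _ tendsto_const])
  with x show ?thesis by (rule that)
qed

lemma norm_sub_qform_sup_sq:
  assumes pos: "positive_op T" and x: "norm x = 1"
  shows "(norm (T x - scaleR (qform_sup T) x))^2 \<le> 2 * qform_sup T * (qform_sup T - qform T x)"
proof -
  let ?M = "qform_sup T"
  have "Re (cinner (T x) (scaleR ?M x)) = ?M * qform T x"
    unfolding qform_def using positive_op_selfadjoint[OF pos, of x x]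
    by (simp add: cinner_scaleR_right)
  then have "(norm (T x - scaleR ?M x))^2 = (norm (T x))^2 + ?M^2 - 2 * ?M * qform T x"
    by (simp add: norm_diff_sq x)
  moreover have "(norm (T x))^2 \<le> ?M^2"
    using norm_apply_le_qform_sup[OF pos, of x] x norm_ge_zero[of "T x"] by (simp add: power_mono)
  ultimately show ?thesis by (simp add: power2_eq_square algebra_simps)
qed

lemma seq_compact_op_eigenvector:
  assumes sc: "seq_compact_op T" and T: "bounded_clinear T" and M: "M \<noteq> 0"
    and x: "\<And>n. norm (x n) = 1" and approx: "(\<lambda>n. T (x n) - scaleR M (x n)) \<longlonglongrightarrow> 0"
  shows "\<exists>e. norm e = 1 \<and> T e = scaleR M e"
proof -
  have "bounded (range x)" unfolding bounded_iff using x by auto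
  then obtain y r where r: "strict_mono r" and y: "(\<lambda>n. T (x (r n))) \<longlonglongrightarrow> y"
    using sc unfolding seq_compact_op_def by blast
  have "(\<lambda>n. T (x (r n)) - scaleR M (x (r n))) \<longlonglongrightarrow> 0"
    using LIMSEQ_subseq_LIMSEQ[OF approx r] by (simp add: o_def)
  from tendsto_diff[OF y this] have "(\<lambda>n. scaleR M (x (r n))) \<longlonglongrightarrow> y" by simp
  from tendsto_scaleR[OF tendsto_const this, of "1 / M"]
  have xr: "(\<lambda>n. x (r n)) \<longlonglongrightarrow> scaleR (1 / M) y" using M by simp
  define e where "e = scaleR (1 / M) y"
  have "(\<lambda>n. norm (x (r n))) \<longlonglongrightarrow> norm e" using tendsto_norm[OF xr] by (simp add: e_def)
  then have "norm e = 1" using x by (simp add: LIMSEQ_const_iff)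
  moreover have "T e = y"
    using LIMSEQ_unique[OF bounded_clinear_tendsto[OF T xr] y] by (simp add: e_def)
  then have "T e = scaleR M e" using M by (simp add: e_def)
  ultimately show ?thesis by blast
qed

lemma positive_op_top_eigenvector:
  fixes T :: "'a::chilbert \<Rightarrow> 'a"
  assumes pos: "positive_op T" and sc: "seq_compact_op T" and u: "norm (u::'a) = 1"
  shows "\<exists>e. norm e = 1 \<and> T e = scaleR (qform_sup T) e"
proof (cases "qform_sup T = 0")
  case True
  then have "T u = 0" using norm_apply_le_qform_sup[OF pos, of u] by simp
  then show ?thesis using u True by auto
next
  case False
  let ?M = "qform_sup T"
  have T: "bounded_clinear T" using positive_opD(1)[OF pos] .
  obtain x where x: "\<And>n. norm (x n) = 1" and lim: "(\<lambda>n. qform T (x n)) \<longlonglongrightarrow> ?M"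
    using qform_sup_sequence[OF T u] by metis
  have "(\<lambda>n. (norm (T (x n) - scaleR ?M (x n)))^2) \<longlonglongrightarrow> 0"
  proof (rule tendsto_sandwich[of "\<lambda>n. 0" _ _ "\<lambda>n. 2 * ?M * (?M - qform T (x n))"])
    show "\<forall>\<^sub>F n in sequentially. (norm (T (x n) - scaleR ?M (x n)))^2 \<le> 2 * ?M * (?M - qform T (x n))"
      by (intro always_eventually allI norm_sub_qform_sup_sq[OF pos x])
    show "(\<lambda>n. 2 * ?M * (?M - qform T (x n))) \<longlonglongrightarrow> 0"
      using tendsto_mult[OF tendsto_const tendsto_diff[OF tendsto_const lim], of "2 * ?M" ?M] by simp
  qed simp_all
  from tendsto_real_sqrt[OF this]
  have "(\<lambda>n. norm (T (x n) - scaleR ?M (x n))) \<longlonglongrightarrow> 0" by simp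
  then show ?thesis
    using seq_compact_op_eigenvector[OF sc T False x] by (simp add: tendsto_norm_zero_iff)
qed

lemma positive_op_sub_butterfly:
  assumes pos: "positive_op T" and ne: "norm e = 1" and eig: "T e = scaleR M e"
  shows "positive_op (\<lambda>x. T x - scaleR M (butterfly e x))"
  unfolding positive_op_def
proof (intro conjI allI)
  have L: "bounded_clinear T" using positive_opD(1)[OF pos] .
  show "bounded_clinear (\<lambda>x. T x - scaleR M (butterfly e x))" by (rule bounded_clinear_sub_butterfly[OF L])
  fix x
  show "Im (cinner x (T x - scaleR M (butterfly e x))) = 0"
    using positive_opD(2)[OF pos, of x] by (simp add: cinner_diff_right cinner_scaleR_right cinner_butterfly_self)
  define c where "c = cinner e x"
  define y where "y = x - scaleC c e"
  have ey: "cinner e y = 0" using ne by (simp add: y_def c_def cinner_diff_right cinner_scaleC_right cinner_self_norm)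
  have ye: "cinner y e = 0" using ey cinner_commute[of e y] by simp
  have xy: "x = y + scaleC c e" by (simp add: y_def)
  have "qform T x = qform T y + M * (cmod c)^2"
  proof -
    have t1: "cinner y (T (scaleC c e)) = 0" using ye
      by (simp add: bounded_clinearD(2)[OF L] eig cinner_scaleC_right cinner_scaleR_right)
    have t2: "cinner (scaleC c e) (T y) = 0"
      using positive_op_selfadjoint[OF pos, of "scaleC c e" y] ey
      by (simp add: bounded_clinearD(2)[OF L] eig cinner_scaleC_left cinner_scaleR_left)
    have t3: "cinner (scaleC c e) (T (scaleC c e)) = complex_of_real (M * (cmod c)^2)"
      using ne by (simp add: bounded_clinearD(2)[OF L] eig cinner_scaleC_left cinner_scaleC_right cinner_scaleR_right
          cinner_self_norm mult_cnj_cmod_sq cnj_mult_cmod_sq mult.commute mult.left_commute)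
    show ?thesis unfolding qform_def
      by (subst (1 2) xy) (simp add: bounded_clinearD(1)[OF L] cinner_add_left cinner_add_right t1 t2 t3)
  qed
  then have "qform (\<lambda>x. T x - scaleR M (butterfly e x)) x = qform T y" by (simp add: qform_sub_butterfly c_def)
  then show "0 \<le> Re (cinner x (T x - scaleR M (butterfly e x)))"
    using qform_nonneg[OF pos, of y] unfolding qform_def by simp
qed

text \<open>Orthonormality and the eigenvalue equation are only required where \<open>l j > 0\<close>: the
  vectors carrying weight zero are padding, so that operators of finite rank fit the same format.\<close>
definition eigen_decomp :: "('a::chilbert \<Rightarrow> 'a) \<Rightarrow> (nat \<Rightarrow> real) \<Rightarrow> (nat \<Rightarrow> 'a) \<Rightarrow> bool" where
  "eigen_decomp T l e \<longleftrightarrow> (\<forall>j. l j \<ge> 0) \<and> decseq l \<and> l \<longlonglongrightarrow> 0 \<and> (\<forall>j. norm (e j) = 1) \<and>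
     (\<forall>i j. i \<noteq> j \<longrightarrow> l i > 0 \<longrightarrow> l j > 0 \<longrightarrow> cinner (e i) (e j) = 0) \<and>
     (\<forall>j. l j > 0 \<longrightarrow> T (e j) = scaleR (l j) (e j)) \<and>
     (\<forall>x. (\<lambda>j. scaleR (l j) (butterfly (e j) x)) sums T x)"

definition top_eigvec :: "('a::chilbert \<Rightarrow> 'a) \<Rightarrow> 'a" where
  "top_eigvec T = (SOME e. norm e = 1 \<and> T e = scaleR (qform_sup T) e)"

definition deflate :: "('a::chilbert \<Rightarrow> 'a) \<Rightarrow> ('a \<Rightarrow> 'a)" where
  "deflate T = (\<lambda>x. T x - scaleR (qform_sup T) (butterfly (top_eigvec T) x))"

definition deflation :: "('a::chilbert \<Rightarrow> 'a) \<Rightarrow> nat \<Rightarrow> ('a \<Rightarrow> 'a)" where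
  "deflation A k = (deflate ^^ k) A"

definition eigval :: "('a::chilbert \<Rightarrow> 'a) \<Rightarrow> nat \<Rightarrow> real" where
  "eigval A k = qform_sup (deflation A k)"

definition eigvec :: "('a::chilbert \<Rightarrow> 'a) \<Rightarrow> nat \<Rightarrow> 'a" where
  "eigvec A k = top_eigvec (deflation A k)"

lemma deflation_0: "deflation A 0 = A" by (simp add: deflation_def)
lemma deflation_Suc: "deflation A (Suc k) = deflate (deflation A k)" by (simp add: deflation_def)

lemma top_eigvec_eigen:
  fixes T :: "'a::chilbert \<Rightarrow> 'a"
  assumes "positive_op T" "seq_compact_op T" "norm (u::'a::chilbert) = 1"
  shows "norm (top_eigvec T) = 1 \<and> T (top_eigvec T) = scaleR (qform_sup T) (top_eigvec T)"
  unfolding top_eigvec_def by (rule someI_ex[OF positive_op_top_eigenvector[OF assms]])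

lemma deflate_positive:
  fixes T :: "'a::chilbert \<Rightarrow> 'a"
  assumes "positive_op T" "seq_compact_op T" "norm (u::'a::chilbert) = 1"
  shows "positive_op (deflate T) \<and> seq_compact_op (deflate T)"
  using top_eigvec_eigen[OF assms] positive_op_sub_butterfly[OF assms(1)] seq_compact_op_sub_butterfly[OF assms(2)]
  unfolding deflate_def by blast

lemma qform_sup_deflate_le:
  fixes T :: "'a::chilbert \<Rightarrow> 'a"
  assumes "positive_op T" "seq_compact_op T" "norm (u::'a::chilbert) = 1"
  shows "qform_sup (deflate T) \<le> qform_sup T"
proof -
  have M0: "0 \<le> qform_sup T" using qform_sup_nonneg[OF assms(1) assms(3)] .
  show ?thesis unfolding qform_sup_def[of "deflate T"]
  proof (rule cSup_least)
    show "qform (deflate T) ` {x. norm x = 1} \<noteq> {}" using assms(3) by blast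
    fix y assume "y \<in> qform (deflate T) ` {x. norm x = 1}"
    then obtain x where x: "norm x = 1" "y = qform (deflate T) x" by blast
    have "qform (deflate T) x \<le> qform T x" unfolding deflate_def qform_sub_butterfly using M0 by simp
    also have "\<dots> \<le> qform_sup T" by (rule qform_le_qform_sup_sphere[OF positive_opD(1)[OF assms(1)] x(1)])
    finally show "y \<le> qform_sup T" using x by simp
  qed
qed

locale spectral_iteration =
  fixes A :: "'a::chilbert \<Rightarrow> 'a" and u :: 'a
  assumes pos: "positive_op A" and sc: "seq_compact_op A" and u: "norm u = 1"
begin

lemma deflation_positive: "positive_op (deflation A k) \<and> seq_compact_op (deflation A k)"
proof (induction k)
  case 0 then show ?case using pos sc by (simp add: deflation_0)
next
  case (Suc k) then show ?case using deflate_positive[OF conjunct1[OF Suc.IH] conjunct2[OF Suc.IH] u] by (simp add: deflation_Suc)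
qed

lemma eigvec_deflation: "norm (eigvec A k) = 1" "deflation A k (eigvec A k) = scaleR (eigval A k) (eigvec A k)"
  using top_eigvec_eigen[OF conjunct1[OF deflation_positive] conjunct2[OF deflation_positive] u, of k]
  unfolding eigvec_def eigval_def by auto

lemma eigval_nonneg: "0 \<le> eigval A k"
  unfolding eigval_def using qform_sup_nonneg[OF conjunct1[OF deflation_positive] u] .

lemma decseq_eigval: "decseq (eigval A)"
proof (rule decseq_SucI)
  fix k show "eigval A (Suc k) \<le> eigval A k"
    unfolding eigval_def deflation_Suc using qform_sup_deflate_le[OF conjunct1[OF deflation_positive] conjunct2[OF deflation_positive] u] .
qed

lemma deflation_eq: "deflation A k x = A x - (\<Sum>j<k. scaleR (eigval A j) (butterfly (eigvec A j) x))"
proof (induction k)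
  case 0 then show ?case by (simp add: deflation_0)
next
  case (Suc k) then show ?case by (simp add: deflation_Suc deflate_def eigval_def eigvec_def)
qed

lemma deflation_eigvec_zero: "j < k \<Longrightarrow> eigval A j > 0 \<Longrightarrow> deflation A k (eigvec A j) = 0"
proof (induction k)
  case 0 then show ?case by simp
next
  case (Suc k)
  have pk: "positive_op (deflation A k)" using deflation_positive by blast
  have e: "deflation A (Suc k) (eigvec A j) = deflation A k (eigvec A j) - scaleR (eigval A k) (butterfly (eigvec A k) (eigvec A j))"
    by (simp add: deflation_Suc deflate_def eigval_def eigvec_def)
  show ?case
  proof (cases "j = k")
    case True
    then show ?thesis using e eigvec_deflation[of k]
      by (simp add: butterfly_def cinner_self_norm scaleC_one)
  next
    case False
    then have jk: "j < k" using Suc.prems by simp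
    have z: "deflation A k (eigvec A j) = 0" using Suc.IH jk Suc.prems by blast
    have "complex_of_real (eigval A k) * cinner (eigvec A k) (eigvec A j) = 0"
    proof -
      have "complex_of_real (eigval A k) * cinner (eigvec A k) (eigvec A j) = cinner (deflation A k (eigvec A k)) (eigvec A j)"
        using eigvec_deflation(2)[of k] by (simp add: cinner_scaleR_left)
      also have "\<dots> = 0" using positive_op_selfadjoint[OF pk] z by simp
      finally show ?thesis .
    qed
    then have "scaleR (eigval A k) (butterfly (eigvec A k) (eigvec A j)) = 0"
      unfolding butterfly_def scaleR_scaleC scaleC_scaleC by (simp only: scaleC_zero_left)
    then show ?thesis using e z by simp
  qed
qed

lemma eigvec_orthogonal_less: 
  assumes "j < k" "eigval A j > 0" "eigval A k > 0"
  shows "cinner (eigvec A k) (eigvec A j) = 0"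
proof -
  have pk: "positive_op (deflation A k)" using deflation_positive by blast
  have "complex_of_real (eigval A k) * cinner (eigvec A k) (eigvec A j) = cinner (deflation A k (eigvec A k)) (eigvec A j)"
    using eigvec_deflation(2)[of k] by (simp add: cinner_scaleR_left)
  also have "\<dots> = 0" using positive_op_selfadjoint[OF pk] deflation_eigvec_zero[OF assms(1,2)] by simp
  finally show ?thesis using assms(3) by simp
qed

lemma eigvec_orthogonal:
  assumes "i \<noteq> j" "eigval A i > 0" "eigval A j > 0"
  shows "cinner (eigvec A i) (eigvec A j) = 0"
proof (cases "i < j")
  case True
  then have "cinner (eigvec A j) (eigvec A i) = 0" using eigvec_orthogonal_less assms by blast
  then show ?thesis by (metis cinner_commute complex_cnj_zero)
next
  case False
  then show ?thesis using eigvec_orthogonal_less assms by simp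
qed

lemma eigvec_eigen:
  assumes "eigval A k > 0"
  shows "A (eigvec A k) = scaleR (eigval A k) (eigvec A k)"
proof -
  have "(\<Sum>j<k. scaleR (eigval A j) (butterfly (eigvec A j) (eigvec A k))) = 0"
  proof (rule sum.neutral, intro ballI)
    fix j assume "j \<in> {..<k}"
    then have jk: "j < k" by simp
    have "eigval A k \<le> eigval A j" using decseq_eigval jk by (simp add: decseqD)
    then have "eigval A j > 0" using assms by simp
    then have "cinner (eigvec A j) (eigvec A k) = 0" using eigvec_orthogonal[of j k] jk assms by simp
    then show "scaleR (eigval A j) (butterfly (eigvec A j) (eigvec A k)) = 0" by (simp add: butterfly_def)
  qed
  then show ?thesis using deflation_eq[of k "eigvec A k"] eigvec_deflation(2)[of k] by simp
qed

text \<open>Otherwise the vectors \<open>A e\<^sub>k = \<lambda>\<^sub>k e\<^sub>k\<close> would be pairwise orthogonal of norm at least the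
  limit, so they could have no convergent subsequence.\<close>
lemma eigval_tendsto_zero: "eigval A \<longlonglongrightarrow> 0"
proof -
  obtain L where L: "eigval A \<longlonglongrightarrow> L" "\<forall>i. L \<le> eigval A i"
    using decseq_convergent[OF decseq_eigval, of 0] eigval_nonneg by blast
  have L0: "0 \<le> L" using LIMSEQ_le_const[OF L(1)] eigval_nonneg by blast
  have "L = 0"
  proof (rule ccontr)
    assume "L \<noteq> 0"
    then have Lp: "L > 0" using L0 by simp
    then have lp: "\<And>k. eigval A k > 0" using L(2) less_le_trans by blast
    have b: "bounded (range (eigvec A))" unfolding bounded_iff using eigvec_deflation(1) by auto
    obtain l r where r: "strict_mono r" "(\<lambda>n. A (eigvec A (r n))) \<longlonglongrightarrow> l"
      using sc b unfolding seq_compact_op_def by blast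
    obtain M where M: "\<forall>m\<ge>M. \<forall>n\<ge>M. norm (A (eigvec A (r m)) - A (eigvec A (r n))) < L"
      using CauchyD[OF LIMSEQ_imp_Cauchy[OF r(2)] Lp] by blast
    define a where "a = r M"
    define b where "b = r (Suc M)"
    have ab: "a \<noteq> b" using r(1) unfolding a_def b_def strict_mono_def by (metis lessI less_irrefl)
    have nl: "norm (A (eigvec A a) - A (eigvec A b)) < L" using M a_def b_def by auto
    have eq: "(norm (A (eigvec A a) - A (eigvec A b)))^2 = (eigval A a)^2 + (eigval A b)^2"
    proof -
      have "cinner (scaleR (eigval A a) (eigvec A a)) (scaleR (eigval A b) (eigvec A b)) = 0"
        using eigvec_orthogonal[OF ab lp lp] by (simp add: cinner_scaleR_left cinner_scaleR_right)
      then show ?thesis using eigvec_eigen[OF lp] eigvec_eigen[OF lp]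
        by (simp add: norm_diff_sq eigvec_deflation(1) eigval_nonneg)
    qed
    have l2: "L^2 \<le> (eigval A a)^2" using L(2) L0 by (simp add: power_mono)
    have "(norm (A (eigvec A a) - A (eigvec A b)))^2 < L^2" using nl by (intro power_strict_mono) auto
    then show False using eq l2 zero_le_power2[of "eigval A b"] by linarith
  qed
  then show ?thesis using L(1) by simp
qed

lemma eigen_series: "(\<lambda>j. scaleR (eigval A j) (butterfly (eigvec A j) x)) sums A x"
  unfolding sums_def
proof -
  have z: "(\<lambda>n. deflation A n x) \<longlonglongrightarrow> 0"
  proof (rule Lim_null_comparison)
    show "\<forall>\<^sub>F n in sequentially. norm (deflation A n x) \<le> eigval A n * norm x"
      using norm_apply_le_qform_sup[OF conjunct1[OF deflation_positive]] unfolding eigval_def by (intro always_eventually) auto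
    show "(\<lambda>n. eigval A n * norm x) \<longlonglongrightarrow> 0"
      using tendsto_mult[OF eigval_tendsto_zero tendsto_const[of "norm x"]] by simp
  qed
  have "(\<lambda>n. A x - deflation A n x) \<longlonglongrightarrow> A x - 0" by (intro tendsto_intros z)
  then show "(\<lambda>n. \<Sum>j<n. scaleR (eigval A j) (butterfly (eigvec A j) x)) \<longlonglongrightarrow> A x"
    by (simp add: deflation_eq)
qed

lemma eigen_decomp_eigval: "eigen_decomp A (eigval A) (eigvec A)"
  unfolding eigen_decomp_def using eigval_nonneg decseq_eigval eigval_tendsto_zero eigvec_deflation(1) eigvec_orthogonal eigvec_eigen eigen_series by blast

end

lemma positive_compact_op_eigen_decomp:
  fixes A :: "'a::chilbert \<Rightarrow> 'a"
  assumes "positive_op A" "compact_op A" "norm (u::'a) = 1"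
  shows "\<exists>l e. eigen_decomp A l e"
proof -
  interpret spectral_iteration A u using assms compact_op_seq_compact_op by unfold_locales auto
  show ?thesis using eigen_decomp_eigval by blast
qed

definition orthonormal_on :: "(nat \<Rightarrow> 'a::chilbert) \<Rightarrow> nat set \<Rightarrow> bool" where
  "orthonormal_on f P \<longleftrightarrow> (\<forall>i\<in>P. norm (f i) = 1) \<and> (\<forall>i\<in>P. \<forall>j\<in>P. i \<noteq> j \<longrightarrow> cinner (f i) (f j) = 0)"

lemma orthonormal_on_cinner: "orthonormal_on f P \<Longrightarrow> i \<in> P \<Longrightarrow> j \<in> P \<Longrightarrow> cinner (f i) (f j) = (if i = j then 1 else 0)"
  unfolding orthonormal_on_def by (auto simp: cinner_self_norm)

lemma cinner_orthonormal_sum: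
  assumes "orthonormal_on f P" "finite S" "S \<subseteq> P" "i \<in> P"
  shows "cinner (f i) (\<Sum>l\<in>S. scaleC (c l) (f l)) = (if i \<in> S then c i else 0)"
proof -
  have "cinner (f i) (\<Sum>l\<in>S. scaleC (c l) (f l)) = (\<Sum>l\<in>S. c l * cinner (f i) (f l))"
    by (simp add: cinner_sum_right cinner_scaleC_right)
  also have "\<dots> = (\<Sum>l\<in>S. if l = i then c l else 0)"
    using assms by (intro sum.cong) (auto simp: orthonormal_on_cinner)
  also have "\<dots> = (if i \<in> S then c i else 0)" using assms(2) by (simp add: sum.delta')
  finally show ?thesis .
qed

lemma norm_orthonormal_sum_sq:
  assumes "orthonormal_on f P" "finite S" "S \<subseteq> P"
  shows "(norm (\<Sum>l\<in>S. scaleC (c l) (f l)))^2 = (\<Sum>l\<in>S. (cmod (c l))^2)"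
proof -
  define s where "s = (\<Sum>l\<in>S. scaleC (c l) (f l))"
  have gen: "\<And>t. cinner (\<Sum>l\<in>S. scaleC (c l) (f l)) t = (\<Sum>l\<in>S. cnj (c l) * cinner (f l) t)"
    by (simp add: cinner_sum_left cinner_scaleC_left)
  have "cinner s s = (\<Sum>l\<in>S. cnj (c l) * cinner (f l) s)"
    using gen[of s] by (simp add: s_def)
  also have "\<dots> = (\<Sum>l\<in>S. complex_of_real ((cmod (c l))^2))"
  proof (intro sum.cong refl)
    fix l assume l: "l \<in> S"
    then have "cinner (f l) s = c l" using cinner_orthonormal_sum[OF assms, of l c] assms(3) by (auto simp: s_def)
    then show "cnj (c l) * cinner (f l) s = complex_of_real ((cmod (c l))^2)" by (simp add: cnj_mult_cmod_sq)
  qed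
  finally have "complex_of_real ((norm s)^2) = complex_of_real (\<Sum>l\<in>S. (cmod (c l))^2)"
    by (simp add: cinner_self_norm)
  then show ?thesis unfolding s_def using of_real_eq_iff by blast
qed

definition fourier_sum :: "(nat \<Rightarrow> 'a::chilbert) \<Rightarrow> nat set \<Rightarrow> 'a \<Rightarrow> 'a" where
  "fourier_sum f S y = (\<Sum>l\<in>S. scaleC (cinner (f l) y) (f l))"

context
  fixes f :: "nat \<Rightarrow> 'a::chilbert" and P S :: "nat set"
  assumes orth: "orthonormal_on f P" and S: "finite S" "S \<subseteq> P"
begin

lemma cinner_fourier_residual: "i \<in> S \<Longrightarrow> cinner (f i) (y - fourier_sum f S y) = 0"
  using cinner_orthonormal_sum[OF orth S, of i "\<lambda>l. cinner (f l) y"] S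
  by (auto simp: fourier_sum_def cinner_diff_right)

lemma cinner_fourier_sum_residual: "cinner (fourier_sum f S y) (y - fourier_sum f S y) = 0"
proof -
  have "cinner (fourier_sum f S y) z = (\<Sum>l\<in>S. cnj (cinner (f l) y) * cinner (f l) z)" for z
    by (simp add: fourier_sum_def cinner_sum_left cinner_scaleC_left)
  then show ?thesis by (simp add: cinner_fourier_residual)
qed

lemma norm_sq_fourier_sum:
  "(norm y)^2 = (norm (y - fourier_sum f S y))^2 + (\<Sum>l\<in>S. (cmod (cinner (f l) y))^2)"
proof -
  let ?s = "fourier_sum f S y"
  have "(norm y)^2 = (norm ?s)^2 + (norm (y - ?s))^2 + 2 * Re (cinner ?s (y - ?s))"
    using norm_add_sq[of ?s "y - ?s"] by simp
  moreover have "(norm ?s)^2 = (\<Sum>l\<in>S. (cmod (cinner (f l) y))^2)"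
    unfolding fourier_sum_def by (rule norm_orthonormal_sum_sq[OF orth S])
  ultimately show ?thesis by (simp add: cinner_fourier_sum_residual)
qed

lemma cinner_fourier_residual_self:
  "cinner y (y - fourier_sum f S y) = complex_of_real ((norm (y - fourier_sum f S y))^2)"
proof -
  let ?s = "fourier_sum f S y"
  have "cinner y (y - ?s) = cinner (y - ?s) (y - ?s) + cinner ?s (y - ?s)"
    by (simp add: cinner_diff_left)
  then show ?thesis by (simp add: cinner_fourier_sum_residual cinner_self_norm)
qed

lemma bessel_inequality: "(\<Sum>l\<in>S. (cmod (cinner (f l) y))^2) \<le> (norm y)^2"
  using norm_sq_fourier_sum[of y] zero_le_power2[of "norm (y - fourier_sum f S y)"] by linarith

end

lemma decseq_weighted_sum_le:
  fixes mu c :: "nat \<Rightarrow> real"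
  assumes dec: "decseq mu" and nn: "\<And>i. 0 \<le> mu i" and c01: "\<And>i. 0 \<le> c i \<and> c i \<le> 1"
    and cs: "(\<Sum>i<N. c i) \<le> real k" and Nk: "k \<le> N"
  shows "(\<Sum>i<N. mu i * c i) \<le> (\<Sum>i<k. mu i)"
proof -
  have "(\<Sum>i<N. mu i * c i) = (\<Sum>i<N. (mu i - mu k) * c i) + mu k * (\<Sum>i<N. c i)"
    by (simp add: sum_distrib_left sum.distrib[symmetric] algebra_simps)
  also have "(\<Sum>i<N. (mu i - mu k) * c i) \<le> (\<Sum>i<N. if i < k then mu i - mu k else 0)"
  proof (rule sum_mono)
    fix i assume "i \<in> {..<N}"
    show "(mu i - mu k) * c i \<le> (if i < k then mu i - mu k else 0)"
    proof (cases "i < k")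
      case True
      then have "mu k \<le> mu i" using dec by (simp add: decseqD)
      then show ?thesis using True c01[of i] by (simp add: mult_left_le)
    next
      case False
      then have "mu i \<le> mu k" using dec by (simp add: decseqD)
      then show ?thesis using False c01[of i] by (simp add: mult_nonpos_nonneg)
    qed
  qed
  also have "(\<Sum>i<N. if i < k then mu i - mu k else 0) = (\<Sum>i<k. mu i - mu k)"
  proof -
    have "{..<N} \<inter> {..<k} = {..<k}" using Nk by auto
    then show ?thesis using sum.inter_restrict[of "{..<N}" "\<lambda>i. mu i - mu k" "{..<k}"] by simp
  qed
  also have "(\<Sum>i<k. mu i - mu k) = (\<Sum>i<k. mu i) - real k * mu k"
    by (simp add: sum_subtractf)
  finally have "(\<Sum>i<N. mu i * c i) \<le> (\<Sum>i<k. mu i) - real k * mu k + mu k * (\<Sum>i<N. c i)"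
    by simp
  moreover have "mu k * (\<Sum>i<N. c i) \<le> mu k * real k"
    using cs nn[of k] by (simp add: mult_left_mono)
  ultimately show ?thesis by (simp add: algebra_simps)
qed

section \<open>Majorization of admissible sequences by the eigenvalues\<close>

lemma sums_qform:
  assumes "(\<lambda>j. scaleR (a j) (butterfly (v j) x)) sums T x"
  shows "(\<lambda>j. a j * (cmod (cinner (v j) x))^2) sums qform T x"
proof -
  have bl: "bounded_linear (\<lambda>y. Re (cinner x y))"
    using bounded_linear_compose[OF bounded_linear_Re bounded_linear_cinner_right] .
  have "(\<lambda>j. Re (cinner x (scaleR (a j) (butterfly (v j) x)))) sums Re (cinner x (T x))"
    using bounded_linear.sums[OF bl assms] .
  then show ?thesis unfolding qform_def by (simp add: cinner_scaleR_right cinner_butterfly_self)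
qed

locale majorization =
  fixes B :: "'a::chilbert \<Rightarrow> 'a" and mu :: "nat \<Rightarrow> real" and f :: "nat \<Rightarrow> 'a"
    and xi :: "nat \<Rightarrow> real" and q :: "nat \<Rightarrow> 'a"
  assumes decomp: "eigen_decomp B mu f" and xi_nonneg: "\<And>j. xi j \<ge> 0"
    and q_norm: "\<And>j. norm (q j) = 1"
    and xi_series: "\<And>x. (\<lambda>j. scaleR (xi j) (butterfly (q j) x)) sums B x"
begin

definition "support = {i. mu i > 0}"

lemma mu_nonneg: "mu i \<ge> 0" using decomp unfolding eigen_decomp_def by blast
lemma decseq_mu: "decseq mu" using decomp unfolding eigen_decomp_def by blast
lemma mu_tendsto_zero: "mu \<longlonglongrightarrow> 0" using decomp unfolding eigen_decomp_def by blast
lemma f_norm: "norm (f i) = 1" using decomp unfolding eigen_decomp_def by blast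
lemma f_eigen: "mu i > 0 \<Longrightarrow> B (f i) = scaleR (mu i) (f i)" using decomp unfolding eigen_decomp_def by blast
lemma f_orthonormal: "orthonormal_on f support"
  using decomp unfolding eigen_decomp_def orthonormal_on_def support_def by blast
lemma mu_series: "(\<lambda>j. scaleR (mu j) (butterfly (f j) x)) sums B x"
  using decomp unfolding eigen_decomp_def by blast

lemma not_support_mu: "i \<notin> support \<Longrightarrow> mu i = 0"
  using mu_nonneg[of i] by (simp add: support_def)

lemma qform_sums_mu: "(\<lambda>i. mu i * (cmod (cinner (f i) x))^2) sums qform B x"
  by (rule sums_qform[OF mu_series])

lemma qform_sums_xi: "(\<lambda>j. xi j * (cmod (cinner (q j) x))^2) sums qform B x"
  by (rule sums_qform[OF xi_series])

lemma sum_xi_le_qform: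
  assumes "finite I" shows "(\<Sum>j\<in>I. xi j * (cmod (cinner (q j) x))^2) \<le> qform B x"
  using sum_le_suminf[OF sums_summable[OF qform_sums_xi[of x]] assms] sums_unique[OF qform_sums_xi[of x]]
  by (simp add: xi_nonneg)

lemma xi_le_qform: "xi j * (cmod (cinner (q j) x))^2 \<le> qform B x"
  using sum_xi_le_qform[of "{j}" x] by simp

lemma qform_f: "i \<in> support \<Longrightarrow> qform B (f i) = mu i"
  unfolding qform_def support_def using f_eigen[of i] f_norm[of i]
  by (simp add: cinner_scaleR_right cinner_self_norm)

lemma qform_orthonormal_sum:
  assumes "finite S" "S \<subseteq> support"
  shows "qform B (\<Sum>l\<in>S. scaleC (c l) (f l)) = (\<Sum>i\<in>S. mu i * (cmod (c i))^2)"
proof -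
  have "(\<lambda>i. mu i * (cmod (cinner (f i) (\<Sum>l\<in>S. scaleC (c l) (f l))))^2) =
        (\<lambda>i. if i \<in> S then mu i * (cmod (c i))^2 else 0)"
  proof
    fix i
    show "mu i * (cmod (cinner (f i) (\<Sum>l\<in>S. scaleC (c l) (f l))))^2 = (if i \<in> S then mu i * (cmod (c i))^2 else 0)"
    proof (cases "i \<in> support")
      case True then show ?thesis using cinner_orthonormal_sum[OF f_orthonormal assms True, of c] by simp
    next
      case False
      then have "mu i = 0" using mu_nonneg[of i] by (simp add: support_def)
      then show ?thesis using False assms(2) by auto
    qed
  qed
  then have "(\<lambda>i. if i \<in> S then mu i * (cmod (c i))^2 else 0) sums qform B (\<Sum>l\<in>S. scaleC (c l) (f l))"
    using qform_sums_mu[of "\<Sum>l\<in>S. scaleC (c l) (f l)"] by simp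
  then show ?thesis using sums_If_finite_set[OF assms(1), of "\<lambda>i. mu i * (cmod (c i))^2"] sums_unique2 by blast
qed

text \<open>Testing \<open>B \<ge> \<xi>\<^sub>j q\<^sub>j q\<^sub>j\<^sup>*\<close> against \<open>B\<^sup>-\<^sup>1 q\<^sub>j\<close>, truncated to the first \<open>N\<close> eigenvectors,
  gives \<open>\<xi>\<^sub>j \<langle>q\<^sub>j, B\<^sup>-\<^sup>1 q\<^sub>j\<rangle> \<le> 1\<close>.\<close>
lemma xi_sum_inverse_le_1:
  "xi j * (\<Sum>i\<in>{..<N} \<inter> support. (cmod (cinner (f i) (q j)))^2 / mu i) \<le> 1"
proof -
  let ?S = "{..<N} \<inter> support"
  define s where "s = (\<Sum>i\<in>?S. (cmod (cinner (f i) (q j)))^2 / mu i)"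
  define x where "x = (\<Sum>l\<in>?S. scaleC (cinner (f l) (q j) / complex_of_real (mu l)) (f l))"
  have S: "finite ?S" "?S \<subseteq> support" by auto
  have "s \<ge> 0" unfolding s_def using mu_nonneg by (intro sum_nonneg) simp
  have "cinner (q j) x = (\<Sum>l\<in>?S. (cinner (f l) (q j) * cnj (cinner (f l) (q j))) / complex_of_real (mu l))"
    using cinner_commute[of "q j" "f _"]
    by (simp add: x_def cinner_sum_right cinner_scaleC_right mult.commute)
  then have qx: "cinner (q j) x = complex_of_real s"
    by (simp add: s_def mult_cnj_cmod_sq)
  have "qform B x = (\<Sum>i\<in>?S. mu i * (cmod (cinner (f i) (q j) / complex_of_real (mu i)))^2)"
    unfolding x_def by (rule qform_orthonormal_sum[OF S])
  also have "\<dots> = s" unfolding s_def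
  proof (intro sum.cong refl)
    fix i assume "i \<in> ?S"
    then have "mu i > 0" by (auto simp: support_def)
    then show "mu i * (cmod (cinner (f i) (q j) / complex_of_real (mu i)))^2
        = (cmod (cinner (f i) (q j)))^2 / mu i"
      by (simp add: norm_divide power_divide power2_eq_square)
  qed
  finally have "xi j * s^2 \<le> s" using xi_le_qform[of j x] qx by simp
  have "xi j * s \<le> 1"
  proof (cases "s = 0")
    case False
    then have "s > 0" using \<open>s \<ge> 0\<close> by simp
    then show ?thesis using \<open>xi j * s^2 \<le> s\<close> by (simp add: power2_eq_square)
  qed simp
  then show ?thesis by (simp only: s_def)
qed

lemma qform_le_tail:
  assumes orth_y: "\<And>i. i \<in> {..<N} \<inter> support \<Longrightarrow> cinner (f i) y = 0"
  shows "qform B y \<le> mu N * (norm y)^2"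
proof -
  let ?T = "{i \<in> support. N \<le> i}"
  have term_le: "mu i * (cmod (cinner (f i) y))^2 \<le> mu N * (if i \<in> ?T then (cmod (cinner (f i) y))^2 else 0)" for i
  proof (cases "i \<in> ?T")
    case True
    then have "mu i \<le> mu N" using decseq_mu by (simp add: decseqD)
    then show ?thesis using True by (simp add: mult_right_mono)
  next
    case False
    then show ?thesis
      using orth_y[of i] not_support_mu[of i] mu_nonneg[of N] by (cases "i \<in> support") auto
  qed
  have "(\<Sum>i<n. mu i * (cmod (cinner (f i) y))^2) \<le> mu N * (norm y)^2" for n
  proof -
    have "(\<Sum>i<n. mu i * (cmod (cinner (f i) y))^2)
        \<le> (\<Sum>i<n. mu N * (if i \<in> ?T then (cmod (cinner (f i) y))^2 else 0))"
      by (rule sum_mono) (rule term_le)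
    also have "\<dots> = mu N * (\<Sum>i\<in>{..<n} \<inter> ?T. (cmod (cinner (f i) y))^2)"
      by (simp add: sum_distrib_left[symmetric] sum.inter_restrict)
    also have "\<dots> \<le> mu N * (norm y)^2"
      using bessel_inequality[OF f_orthonormal, of "{..<n} \<inter> ?T" y] mu_nonneg[of N]
      by (intro mult_left_mono) auto
    finally show ?thesis .
  qed
  then show ?thesis
    using LIMSEQ_le_const2[OF qform_sums_mu[of y, unfolded sums_def]] by blast
qed

lemma norm_sq_fourier_residual_le:
  assumes xi: "xi j > 0"
  shows "(norm (q j - fourier_sum f ({..<N} \<inter> support) (q j)))^2 \<le> mu N / xi j"
proof -
  let ?S = "{..<N} \<inter> support"
  define a where "a = (norm (q j - fourier_sum f ?S (q j)))^2"
  have S: "finite ?S" "?S \<subseteq> support" by auto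
  have "xi j * a^2 \<le> qform B (q j - fourier_sum f ?S (q j))"
    using xi_le_qform[of j "q j - fourier_sum f ?S (q j)"]
      cinner_fourier_residual_self[OF f_orthonormal S, of "q j"]
    by (simp add: a_def norm_power)
  also have "\<dots> \<le> mu N * a"
    unfolding a_def by (rule qform_le_tail) (rule cinner_fourier_residual[OF f_orthonormal S])
  finally have "(xi j * a) * a \<le> mu N * a" by (simp add: power2_eq_square mult.assoc)
  then have "xi j * a \<le> mu N"
    using mu_nonneg[of N] xi by (cases "a = 0") (auto simp: a_def)
  then show ?thesis using xi by (simp add: a_def field_simps)
qed

text \<open>Each \<open>q\<^sub>j\<close> with \<open>\<xi>\<^sub>j > 0\<close> lies in the closed span of the eigenvectors.\<close>
lemma coefficients_sums_one:
  assumes xi: "xi j > 0"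
  shows "(\<lambda>i. if i \<in> support then (cmod (cinner (f i) (q j)))^2 else 0) sums 1"
proof -
  define r where "r N = (norm (q j - fourier_sum f ({..<N} \<inter> support) (q j)))^2" for N
  have "r \<longlonglongrightarrow> 0"
  proof (rule tendsto_sandwich[of "\<lambda>N. 0" _ _ "\<lambda>N. mu N / xi j"])
    show "\<forall>\<^sub>F N in sequentially. r N \<le> mu N / xi j"
      using norm_sq_fourier_residual_le[OF xi] by (simp add: r_def)
    show "(\<lambda>N. mu N / xi j) \<longlonglongrightarrow> 0" using tendsto_divide_zero[OF mu_tendsto_zero] by blast
  qed (simp_all add: r_def)
  then have "(\<lambda>N. 1 - r N) \<longlonglongrightarrow> 1 - 0" by (intro tendsto_intros)
  moreover have "(\<Sum>i<N. if i \<in> support then (cmod (cinner (f i) (q j)))^2 else 0) = 1 - r N" for N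
    using norm_sq_fourier_sum[OF f_orthonormal, of "{..<N} \<inter> support" "q j"] q_norm[of j]
    by (simp add: r_def sum.inter_restrict)
  ultimately show ?thesis unfolding sums_def by simp
qed

definition weight :: "nat \<Rightarrow> nat \<Rightarrow> real" where
  "weight k i = (if i \<in> support then (\<Sum>j<k. xi j * (cmod (cinner (f i) (q j)))^2) / mu i else 0)"

lemma weight_bounds: "0 \<le> weight k i \<and> weight k i \<le> 1"
proof (cases "i \<in> support")
  case True
  have "(\<Sum>j<k. xi j * (cmod (cinner (f i) (q j)))^2) \<le> qform B (f i)"
    using sum_xi_le_qform[of "{..<k}" "f i"] by (simp add: cmod_cinner_commute)
  moreover have "0 \<le> (\<Sum>j<k. xi j * (cmod (cinner (f i) (q j)))^2)"
    using xi_nonneg by (intro sum_nonneg) simp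
  ultimately show ?thesis using True qform_f[OF True] by (simp add: weight_def support_def)
qed (simp add: weight_def)

lemma sum_weight_le: "(\<Sum>i<N. weight k i) \<le> real k"
proof -
  have "weight k i = (if i \<in> support then \<Sum>j<k. xi j * (cmod (cinner (f i) (q j)))^2 / mu i else 0)" for i
    unfolding weight_def by (simp add: sum_divide_distrib)
  then have "(\<Sum>i<N. weight k i)
      = (\<Sum>i\<in>{..<N} \<inter> support. \<Sum>j<k. xi j * (cmod (cinner (f i) (q j)))^2 / mu i)"
    by (simp add: sum.inter_restrict)
  also have "\<dots> = (\<Sum>j<k. xi j * (\<Sum>i\<in>{..<N} \<inter> support. (cmod (cinner (f i) (q j)))^2 / mu i))"
    by (subst sum.swap) (simp add: sum_distrib_left)
  also have "\<dots> \<le> (\<Sum>j<k. 1)" by (intro sum_mono xi_sum_inverse_le_1)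
  finally show ?thesis by simp
qed

lemma weighted_mu_sums: "(\<lambda>i. mu i * weight k i) sums (\<Sum>j<k. xi j)"
proof -
  have "(\<lambda>i. xi j * (if i \<in> support then (cmod (cinner (f i) (q j)))^2 else 0)) sums xi j" for j
    using sums_mult[OF coefficients_sums_one, of j "xi j"] xi_nonneg[of j]
    by (cases "xi j = 0") (auto simp: less_le)
  moreover have "mu i * weight k i = (\<Sum>j<k. xi j * (if i \<in> support then (cmod (cinner (f i) (q j)))^2 else 0))" for i
    by (cases "i \<in> support") (auto simp: weight_def support_def)
  ultimately show ?thesis by (simp add: sums_sum)
qed

theorem partial_sums_le: "(\<Sum>j<k. xi j) \<le> (\<Sum>j<k. mu j)"
proof -
  have "(\<Sum>i<N. mu i * weight k i) \<le> (\<Sum>i<k. mu i)" if "N \<ge> k" for N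
    using decseq_weighted_sum_le[OF decseq_mu mu_nonneg weight_bounds sum_weight_le that] .
  then show ?thesis
    using LIMSEQ_le_const2[OF weighted_mu_sums[unfolded sums_def]] by blast
qed

end

section \<open>Riesz representation and adjoints\<close>

lemma norm_diff_sq_le_near_minimal:
  fixes x a b :: "'a::chilbert"
  assumes mid: "D \<le> (norm (x - scaleR (1/2) (a + b)))^2"
    and a: "(norm (x - a))^2 \<le> D + s" and b: "(norm (x - b))^2 \<le> D + t"
  shows "(norm (a - b))^2 \<le> 2 * s + 2 * t"
proof -
  have "(x - a) + (x - b) = scaleR 2 (x - scaleR (1/2) (a + b))"
    by (simp add: algebra_simps scaleR_2)
  then have "(norm ((x - a) + (x - b)))^2 = 4 * (norm (x - scaleR (1/2) (a + b)))^2"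
    by (simp add: power_mult_distrib)
  moreover have "norm ((x - a) - (x - b)) = norm (a - b)"
    using norm_minus_commute[of b a] by simp
  ultimately show ?thesis
    using parallelogram_law[of "x - a" "x - b"] mid a b by simp
qed

lemma Cauchy_near_minimal:
  fixes mm :: "nat \<Rightarrow> 'a::chilbert"
  assumes D_le: "\<And>p q. D \<le> (norm (x - scaleR (1/2) (mm p + mm q)))^2"
    and near: "\<And>n. (norm (x - mm n))^2 < D + 1 / real (Suc n)"
  shows "Cauchy mm"
proof (rule CauchyI)
  fix e :: real assume e: "e > 0"
  obtain N where "inverse (real (Suc N)) < e^2 / 4"
    using reals_Archimedean e by (metis divide_pos_pos zero_less_numeral zero_less_power)
  then have N: "4 / real (Suc N) < e^2" by (simp add: field_simps)
  have "norm (mm p - mm q) < e" if "p \<ge> N" "q \<ge> N" for p q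
  proof -
    have "(norm (mm p - mm q))^2 \<le> 2 * (1 / real (Suc p)) + 2 * (1 / real (Suc q))"
      using norm_diff_sq_le_near_minimal[OF D_le less_imp_le[OF near] less_imp_le[OF near]] .
    moreover have "1 / real (Suc p) \<le> 1 / real (Suc N)" "1 / real (Suc q) \<le> 1 / real (Suc N)"
      using that by (simp_all add: frac_le)
    ultimately have "(norm (mm p - mm q))^2 < e^2" using N by simp
    then show ?thesis using e by (simp add: power_less_imp_less_base)
  qed
  then show "\<exists>M. \<forall>m\<ge>M. \<forall>n\<ge>M. norm (mm m - mm n) < e" by blast
qed

lemma closed_subspace_nearest_point:
  fixes M :: "'a::chilbert set"
  assumes closed: "closed M" and zero: "0 \<in> M" and add: "\<And>a b. a \<in> M \<Longrightarrow> b \<in> M \<Longrightarrow> a + b \<in> M"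
    and scale: "\<And>c a. a \<in> M \<Longrightarrow> scaleC c a \<in> M"
  obtains m where "m \<in> M" and "\<And>y. y \<in> M \<Longrightarrow> (norm (x - m))^2 \<le> (norm (x - y))^2"
proof -
  define D where "D = Inf ((\<lambda>m. (norm (x - m))^2) ` M)"
  have ne: "(\<lambda>m. (norm (x - m))^2) ` M \<noteq> {}" using zero by blast
  have bb: "bdd_below ((\<lambda>m. (norm (x - m))^2) ` M)" by (rule bdd_belowI[of _ 0]) auto
  have D_le: "D \<le> (norm (x - m))^2" if "m \<in> M" for m
    unfolding D_def using bb that by (intro cInf_lower) auto
  have "\<exists>m\<in>M. (norm (x - m))^2 < D + 1 / real (Suc n)" for n
  proof -
    have "D < D + 1 / real (Suc n)" by simp
    then show ?thesis using cInf_less_iff[OF ne bb] unfolding D_def by blast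
  qed
  then obtain mm where mm: "\<And>n. mm n \<in> M" "\<And>n. (norm (x - mm n))^2 < D + 1 / real (Suc n)"
    by metis
  have mid: "scaleR (1/2) (a + b) \<in> M" if "a \<in> M" "b \<in> M" for a b
    using scale[of "a + b" "complex_of_real (1/2)"] add[OF that] by (simp add: scaleR_scaleC)
  have "Cauchy mm"
    by (rule Cauchy_near_minimal[OF D_le[OF mid[OF mm(1) mm(1)]] mm(2)])
  then obtain m where lim: "mm \<longlonglongrightarrow> m" using Cauchy_convergent_iff convergent_def by blast
  have "(norm (x - m))^2 \<le> (norm (x - y))^2" if "y \<in> M" for y
  proof -
    have "(\<lambda>n. (norm (x - mm n))^2) \<longlonglongrightarrow> (norm (x - m))^2" by (intro tendsto_intros lim)
    moreover have "(\<lambda>n. D + 1 / real (Suc n)) \<longlonglongrightarrow> D + 0"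
      using LIMSEQ_inverse_real_of_nat by (intro tendsto_intros) (simp add: inverse_eq_divide)
    ultimately have "(norm (x - m))^2 \<le> D + 0"
      using mm(2) by (intro LIMSEQ_le[where X="\<lambda>n. (norm (x - mm n))^2"]) (auto intro: less_imp_le)
    then show ?thesis using D_le[OF that] by linarith
  qed
  with closed_sequentially[OF closed mm(1) lim] show ?thesis by (rule that)
qed

text \<open>Minimizing \<open>\<parallel>w - t y\<parallel>\<^sup>2\<close> over \<open>t = \<langle>y, w\<rangle> / \<parallel>y\<parallel>\<^sup>2\<close> forces \<open>\<langle>y, w\<rangle> = 0\<close>.\<close>
lemma nearest_point_orthogonal:
  fixes M :: "'a::chilbert set"
  assumes m: "m \<in> M" and add: "\<And>a b. a \<in> M \<Longrightarrow> b \<in> M \<Longrightarrow> a + b \<in> M"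
    and scale: "\<And>c a. a \<in> M \<Longrightarrow> scaleC c a \<in> M"
    and nearest: "\<And>y. y \<in> M \<Longrightarrow> (norm (x - m))^2 \<le> (norm (x - y))^2" and y: "y \<in> M"
  shows "cinner y (x - m) = 0"
proof (cases "y = 0")
  case False
  define w where "w = x - m"
  define t where "t = cinner y w / complex_of_real ((norm y)^2)"
  have "(norm w)^2 \<le> (norm (w - scaleC t y))^2"
    using nearest[OF add[OF m scale[OF y]]] by (simp add: w_def algebra_simps)
  also have "\<dots> = (norm w)^2 + (cmod t * norm y)^2 - 2 * Re (t * cinner w y)"
    by (simp add: norm_diff_sq norm_scaleC cinner_scaleC_right)
  also have "t * cinner w y = complex_of_real ((cmod (cinner y w))^2 / (norm y)^2)"
    using cinner_commute[of w y] by (simp add: t_def mult_cnj_cmod_sq)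
  also have "(cmod t * norm y)^2 = (cmod (cinner y w))^2 / (norm y)^2"
  proof -
    have "cmod t = cmod (cinner y w) / (norm y)^2" unfolding t_def norm_divide norm_of_real by simp
    then show ?thesis using False by (simp add: field_simps power2_eq_square)
  qed
  finally have "(cmod (cinner y w))^2 / (norm y)^2 \<le> 0" by simp
  then have "(cmod (cinner y w))^2 \<le> 0" using False by (simp add: divide_le_0_iff)
  then show ?thesis by (simp add: w_def)
qed simp

lemma bounded_linear_clinear_functional:
  fixes phi :: "'a::chilbert \<Rightarrow> complex"
  assumes add: "\<And>x y. phi (x + y) = phi x + phi y" and hom: "\<And>c x. phi (scaleC c x) = c * phi x"
    and bd: "\<And>x. cmod (phi x) \<le> norm x * K"
  shows "bounded_linear phi"
proof (rule bounded_linear_intro[where K=K])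
  show "phi (scaleR r x) = scaleR r (phi x)" for r x
    using hom[of "complex_of_real r" x] by (simp add: scaleR_scaleC scaleR_conv_of_real)
qed (simp_all add: add bd)

lemma riesz_representation:
  fixes phi :: "'a::chilbert \<Rightarrow> complex"
  assumes add: "\<And>x y. phi (x + y) = phi x + phi y" and hom: "\<And>c x. phi (scaleC c x) = c * phi x"
    and bd: "\<And>x. cmod (phi x) \<le> norm x * K"
  shows "\<exists>y. \<forall>x. phi x = cinner y x"
proof (cases "\<forall>x. phi x = 0")
  case True then show ?thesis by (intro exI[of _ 0]) simp
next
  case False
  then obtain x0 where x0: "phi x0 \<noteq> 0" by blast
  have bl: "bounded_linear phi" by (rule bounded_linear_clinear_functional[OF add hom bd])
  have p0: "phi 0 = 0" using hom[of 0 0] by simp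
  define M where "M = {x. phi x = 0}"
  have cl: "closed M" unfolding M_def
    by (rule closed_Collect_eq[OF linear_continuous_on[OF bl] continuous_on_const])
  have M_add: "a + b \<in> M" if "a \<in> M" "b \<in> M" for a b using that add by (simp add: M_def)
  have M_scale: "scaleC c a \<in> M" if "a \<in> M" for c a using that hom by (simp add: M_def)
  obtain m where m: "m \<in> M" and nearest: "\<And>y. y \<in> M \<Longrightarrow> (norm (x0 - m))^2 \<le> (norm (x0 - y))^2"
    using closed_subspace_nearest_point[OF cl _ M_add M_scale, of x0] p0 by (auto simp: M_def)
  note orth = nearest_point_orthogonal[OF m M_add M_scale nearest]
  define w where "w = x0 - m"
  have pw: "phi w = phi x0"
    using m(1) add[of "x0 - m" m] by (simp add: w_def M_def)
  have w0: "w \<noteq> 0" using pw x0 p0 by auto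
  have key: "cinner w x = (phi x / phi w) * complex_of_real ((norm w)^2)" for x
  proof -
    define v where "v = x - scaleC (phi x / phi w) w"
    have "phi v = 0"
      using add[of v "scaleC (phi x / phi w) w"] hom[of "phi x / phi w" w] pw x0
      by (simp add: v_def)
    then have "cinner v w = 0" using orth[of v] by (simp add: M_def w_def)
    then have "cinner w v = 0" by (metis cinner_commute complex_cnj_zero)
    then show ?thesis by (simp add: v_def cinner_diff_right cinner_scaleC_right cinner_self_norm)
  qed
  define y where "y = scaleC (cnj (phi w) / complex_of_real ((norm w)^2)) w"
  have "phi x = cinner y x" for x
    using key[of x] w0 pw x0 by (simp add: y_def cinner_scaleC_left)
  then show ?thesis by blast
qed

lemma adj_exists:
  assumes L: "bounded_clinear V"
  shows "\<exists>S. \<forall>x y. cinner (V x) y = cinner x (S y)"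
proof -
  obtain K where K: "\<forall>x. norm (V x) \<le> norm x * K" using L unfolding bounded_clinear_def by blast
  have "\<exists>s. \<forall>x. cinner (V x) y = cinner x s" for y
  proof -
    have "\<exists>s. \<forall>x. cinner y (V x) = cinner s x"
    proof (rule riesz_representation[where K="norm y * K"])
      show "cinner y (V (x + z)) = cinner y (V x) + cinner y (V z)" for x z
        by (simp add: bounded_clinearD(1)[OF L] cinner_add_right)
      show "cinner y (V (scaleC c x)) = c * cinner y (V x)" for c x
        by (simp add: bounded_clinearD(2)[OF L] cinner_scaleC_right)
      show "cmod (cinner y (V x)) \<le> norm x * (norm y * K)" for x
      proof -
        have "cmod (cinner y (V x)) \<le> norm y * norm (V x)" by (rule cinner_cauchy_schwarz)
        also have "\<dots> \<le> norm y * (norm x * K)" using K by (simp add: mult_left_mono)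
        finally show ?thesis by (simp add: algebra_simps)
      qed
    qed
    then obtain s where s: "\<forall>x. cinner y (V x) = cinner s x" by blast
    have "cinner (V x) y = cinner x s" for x using s[rule_format, of x]
      by (metis cinner_commute)
    then show ?thesis by blast
  qed
  then show ?thesis by metis
qed

lemma cinner_adj:
  assumes "bounded_clinear V"
  shows "cinner (V x) y = cinner x (adj V y)"
proof -
  have "\<forall>x y. cinner (V x) y = cinner x (adj V y)"
    unfolding adj_def using someI_ex[OF adj_exists[OF assms]] .
  then show ?thesis by blast
qed

lemma adj_eqI:
  assumes "\<forall>x y. cinner (T x) y = cinner x (S y)"
  shows "adj T = S"
proof -
  have "\<forall>x y. cinner (T x) y = cinner x (adj T y)"
    unfolding adj_def using someI_ex[of "\<lambda>S. \<forall>x y. cinner (T x) y = cinner x (S y)"] assms by blast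
  then show ?thesis using assms by (intro ext cinner_ext_left) metis
qed

section \<open>Partial isometries between orthonormal families\<close>

lemma sum_if_inter: "(\<Sum>j\<in>A. if j \<in> P then v j else 0) = (\<Sum>j\<in>A \<inter> P. v j)" if "finite A"
  using sum.inter_restrict[OF that, of v P] by simp

lemma summable_orthonormal_series:
  fixes g :: "nat \<Rightarrow> 'a::chilbert"
  assumes og: "orthonormal_on g P" and bd: "\<And>n. (\<Sum>j<n. if j \<in> P then (cmod (a j))^2 else 0) \<le> C"
  shows "summable (\<lambda>j. if j \<in> P then scaleC (a j) (g j) else 0)"
proof -
  define s where "s j = (if j \<in> P then (cmod (a j))^2 else 0)" for j
  have ss: "summable s"
    by (rule summableI_nonneg_bounded[where x=C]) (auto simp: s_def bd[unfolded s_def])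
  show ?thesis unfolding summable_Cauchy
  proof (intro allI impI)
    fix e :: real assume e: "e > 0"
    then obtain N where N: "\<forall>m\<ge>N. \<forall>n. norm (sum s {m..<n}) < e^2"
      using ss[unfolded summable_Cauchy] by (meson zero_less_power)
    have "norm (\<Sum>j\<in>{m..<n}. if j \<in> P then scaleC (a j) (g j) else 0) < e" if m: "m \<ge> N" for m n
    proof -
      have "(norm (\<Sum>j\<in>{m..<n}. if j \<in> P then scaleC (a j) (g j) else 0))^2
          = (norm (\<Sum>j\<in>{m..<n} \<inter> P. scaleC (a j) (g j)))^2" by (simp add: sum_if_inter)
      also have "\<dots> = (\<Sum>j\<in>{m..<n} \<inter> P. (cmod (a j))^2)" by (rule norm_orthonormal_sum_sq[OF og]) auto
      also have "\<dots> = sum s {m..<n}" by (simp add: s_def sum_if_inter)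
      also have "\<dots> < e^2" using N m by (simp add: abs_less_iff)
      finally show ?thesis using e by (simp add: power_less_imp_less_base)
    qed
    then show "\<exists>N. \<forall>m\<ge>N. \<forall>n. norm (\<Sum>j\<in>{m..<n}. if j \<in> P then scaleC (a j) (g j) else 0) < e" by blast
  qed
qed

definition transfer :: "(nat \<Rightarrow> 'a::chilbert) \<Rightarrow> (nat \<Rightarrow> 'a) \<Rightarrow> nat set \<Rightarrow> 'a \<Rightarrow> 'a" where
  "transfer e g P x = (\<Sum>j. if j \<in> P then scaleC (cinner (e j) x) (g j) else 0)"

locale orthonormal_pair =
  fixes e g :: "nat \<Rightarrow> 'a::chilbert" and P :: "nat set"
  assumes e_orthonormal: "orthonormal_on e P" and g_orthonormal: "orthonormal_on g P"
begin

lemma bessel_partial_sums: "(\<Sum>j<n. if j \<in> P then (cmod (cinner (e j) x))^2 else 0) \<le> (norm x)^2"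
  using bessel_inequality[OF e_orthonormal, of "{..<n} \<inter> P" x] by (simp add: sum_if_inter)

lemma transfer_sums: "(\<lambda>j. if j \<in> P then scaleC (cinner (e j) x) (g j) else 0) sums transfer e g P x"
  unfolding transfer_def
  by (rule summable_sums[OF summable_orthonormal_series[OF g_orthonormal bessel_partial_sums]])

lemma transfer_eqI:
  "(\<lambda>j. if j \<in> P then scaleC (cinner (e j) x) (g j) else 0) sums y \<Longrightarrow> transfer e g P x = y"
  by (rule sums_unique2[OF transfer_sums])

lemma cinner_transfer:
  assumes i: "i \<in> P" shows "cinner (g i) (transfer e g P x) = cinner (e i) x"
proof -
  have "(\<lambda>j. cinner (g i) (if j \<in> P then scaleC (cinner (e j) x) (g j) else 0))
      sums cinner (g i) (transfer e g P x)"
    by (rule bounded_linear.sums[OF bounded_linear_cinner_right transfer_sums])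
  moreover have "(\<lambda>j. cinner (g i) (if j \<in> P then scaleC (cinner (e j) x) (g j) else 0))
      = (\<lambda>j. if j = i then cinner (e j) x else 0)"
    using i g_orthonormal by (auto simp: cinner_scaleC_right orthonormal_on_cinner)
  ultimately show ?thesis using sums_unique2[OF _ sums_single] by metis
qed

lemma norm_transfer_sums:
  "(\<lambda>j. if j \<in> P then (cmod (cinner (e j) x))^2 else 0) sums (norm (transfer e g P x))^2"
proof -
  have "(\<lambda>j. cinner (if j \<in> P then scaleC (cinner (e j) x) (g j) else 0) (transfer e g P x))
      sums cinner (transfer e g P x) (transfer e g P x)"
    by (rule bounded_linear.sums[OF bounded_linear_cinner_left transfer_sums])
  moreover have "(\<lambda>j. cinner (if j \<in> P then scaleC (cinner (e j) x) (g j) else 0) (transfer e g P x)) =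
      (\<lambda>j. complex_of_real (if j \<in> P then (cmod (cinner (e j) x))^2 else 0))"
    by (auto simp: cinner_scaleC_left cinner_transfer cnj_mult_cmod_sq)
  ultimately have "(\<lambda>j. complex_of_real (if j \<in> P then (cmod (cinner (e j) x))^2 else 0))
      sums complex_of_real ((norm (transfer e g P x))^2)"
    by (simp add: cinner_self_norm)
  then show ?thesis by (simp only: sums_of_real_iff)
qed

lemma norm_transfer_le: "norm (transfer e g P x) \<le> norm x"
proof -
  have "(norm (transfer e g P x))^2 \<le> (norm x)^2"
    using LIMSEQ_le_const2[OF norm_transfer_sums[unfolded sums_def]] bessel_partial_sums by blast
  then show ?thesis by (simp add: power2_le_iff_abs_le)
qed

lemma bounded_clinear_transfer: "bounded_clinear (transfer e g P)"
  unfolding bounded_clinear_def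
proof (intro conjI allI exI)
  fix x y
  show "transfer e g P (x + y) = transfer e g P x + transfer e g P y"
  proof (rule transfer_eqI)
    have "(\<lambda>j. (if j \<in> P then scaleC (cinner (e j) x) (g j) else 0)
        + (if j \<in> P then scaleC (cinner (e j) y) (g j) else 0)) sums (transfer e g P x + transfer e g P y)"
      by (intro sums_add transfer_sums)
    then show "(\<lambda>j. if j \<in> P then scaleC (cinner (e j) (x + y)) (g j) else 0)
        sums (transfer e g P x + transfer e g P y)"
      by (simp add: cinner_add_right scaleC_add_left if_distrib cong: if_cong)
  qed
next
  fix c x
  show "transfer e g P (scaleC c x) = scaleC c (transfer e g P x)"
  proof (rule transfer_eqI)
    have "(\<lambda>j. scaleC c (if j \<in> P then scaleC (cinner (e j) x) (g j) else 0))
        sums scaleC c (transfer e g P x)"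
      by (rule bounded_linear.sums[OF bounded_linear_scaleC_right transfer_sums])
    then show "(\<lambda>j. if j \<in> P then scaleC (cinner (e j) (scaleC c x)) (g j) else 0)
        sums scaleC c (transfer e g P x)"
      by (simp add: cinner_scaleC_right scaleC_scaleC if_distrib cong: if_cong)
  qed
next
  fix x show "norm (transfer e g P x) \<le> norm x * 1" using norm_transfer_le by simp
qed

lemma transfer_adjoint: "cinner (transfer e g P x) y = cinner x (transfer g e P y)"
proof -
  interpret ge: orthonormal_pair g e P using e_orthonormal g_orthonormal by unfold_locales
  have "(\<lambda>j. cinner (if j \<in> P then scaleC (cinner (e j) x) (g j) else 0) y)
      sums cinner (transfer e g P x) y"
    by (rule bounded_linear.sums[OF bounded_linear_cinner_left transfer_sums])
  moreover have "cinner (scaleC (cinner (e j) x) (g j)) y = cinner x (scaleC (cinner (g j) y) (e j))" for j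
    using cinner_commute[of "e j" x] by (simp add: cinner_scaleC_left cinner_scaleC_right mult.commute)
  then have "(\<lambda>j. cinner (if j \<in> P then scaleC (cinner (e j) x) (g j) else 0) y)
      = (\<lambda>j. cinner x (if j \<in> P then scaleC (cinner (g j) y) (e j) else 0))"
    by (simp add: fun_eq_iff)
  ultimately have "(\<lambda>j. cinner x (if j \<in> P then scaleC (cinner (g j) y) (e j) else 0))
      sums cinner (transfer e g P x) y" by simp
  from sums_unique2[OF this bounded_linear.sums[OF bounded_linear_cinner_right ge.transfer_sums]]
  show ?thesis .
qed

lemma transfer_basis: "i \<in> P \<Longrightarrow> transfer e g P (e i) = g i"
proof (rule transfer_eqI)
  assume i: "i \<in> P"
  then have "(\<lambda>j. if j \<in> P then scaleC (cinner (e j) (e i)) (g j) else 0) = (\<lambda>j. if j = i then g j else 0)"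
    using e_orthonormal by (auto simp: orthonormal_on_cinner scaleC_one)
  then show "(\<lambda>j. if j \<in> P then scaleC (cinner (e j) (e i)) (g j) else 0) sums g i"
    using sums_single[of i g] by simp
qed

lemma transfer_orthogonal: "(\<And>j. j \<in> P \<Longrightarrow> cinner (e j) z = 0) \<Longrightarrow> transfer e g P z = 0"
  by (rule transfer_eqI) (simp add: sums_zero cong: if_cong)

end

lemma projection_op_eqI:
  assumes p1: "projection_op R1" and p2: "projection_op R2" and r: "range R1 = range R2"
  shows "R1 = R2"
proof
  fix x
  have i1: "R1 \<circ> R1 = R1" and s1: "\<forall>x y. cinner (R1 x) y = cinner x (R1 y)"
    using p1 unfolding projection_op_def selfadjoint_op_def by auto
  have i2: "R2 \<circ> R2 = R2" and s2: "\<forall>x y. cinner (R2 x) y = cinner x (R2 y)"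
    using p2 unfolding projection_op_def selfadjoint_op_def by auto
  have fix2: "R2 z = z" if "z \<in> range R2" for z
    using that i2 by (metis comp_apply rangeE)
  have fix1: "R1 z = z" if "z \<in> range R1" for z
    using that i1 by (metis comp_apply rangeE)
  have a: "R2 (R1 x) = R1 x" using fix2 r by (metis rangeI)
  have b: "R1 (R2 y) = R2 y" for y using fix1 r by (metis rangeI)
  show "R1 x = R2 x"
  proof (rule cinner_ext_right)
    fix y
    have "cinner (R1 x) y = cinner (R2 (R1 x)) y" using a by simp
    also have "\<dots> = cinner (R1 x) (R2 y)" using s2 by simp
    also have "\<dots> = cinner x (R1 (R2 y))" using s1 by simp
    also have "\<dots> = cinner x (R2 y)" using b by simp
    also have "\<dots> = cinner (R2 x) y" using s2 by simp
    finally show "cinner (R1 x) y = cinner (R2 x) y" .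
  qed
qed

lemma eigen_decomp_orthonormal_on: "eigen_decomp T l e \<Longrightarrow> orthonormal_on e {j. l j > 0}"
  unfolding eigen_decomp_def orthonormal_on_def by blast

locale eigen_decomposed =
  fixes A :: "'a::chilbert \<Rightarrow> 'a" and l :: "nat \<Rightarrow> real" and e :: "nat \<Rightarrow> 'a"
  assumes decomp: "eigen_decomp A l e" and posA: "positive_op A"
begin

definition "support = {j. l j > 0}"
definition "supp_proj = transfer e e support"

lemma e_orthonormal: "orthonormal_on e support" using eigen_decomp_orthonormal_on[OF decomp] by (simp add: support_def)
lemma l_nonneg: "l j \<ge> 0" using decomp unfolding eigen_decomp_def by blast
lemma e_norm: "norm (e j) = 1" using decomp unfolding eigen_decomp_def by blast
lemma e_eigen: "l j > 0 \<Longrightarrow> A (e j) = scaleR (l j) (e j)" using decomp unfolding eigen_decomp_def by blast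
lemma A_series: "(\<lambda>j. scaleR (l j) (butterfly (e j) x)) sums A x" using decomp unfolding eigen_decomp_def by blast

sublocale ee: orthonormal_pair e e support using e_orthonormal by unfold_locales

lemma bounded_clinear_supp_proj: "bounded_clinear supp_proj" unfolding supp_proj_def by (rule ee.bounded_clinear_transfer)

lemma cinner_supp_proj: "i \<in> support \<Longrightarrow> cinner (e i) (supp_proj x) = cinner (e i) x"
  unfolding supp_proj_def by (rule ee.cinner_transfer)

lemma supp_proj_idem: "supp_proj (supp_proj x) = supp_proj x"
  unfolding supp_proj_def
  by (rule ee.transfer_eqI) (simp add: ee.cinner_transfer ee.transfer_sums cong: if_cong)

lemma supp_proj_selfadjoint: "cinner (supp_proj x) y = cinner x (supp_proj y)"
  unfolding supp_proj_def by (rule ee.transfer_adjoint)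

lemma projection_op_supp_proj: "projection_op supp_proj"
  unfolding projection_op_def selfadjoint_op_def using bounded_clinear_supp_proj supp_proj_idem supp_proj_selfadjoint by auto

lemma supp_proj_A: "supp_proj (A x) = A x"
  unfolding supp_proj_def
proof (rule ee.transfer_eqI)
  have "(if j \<in> support then scaleC (cinner (e j) (A x)) (e j) else 0) = scaleR (l j) (butterfly (e j) x)" for j
  proof (cases "j \<in> support")
    case True
    then have "cinner (e j) (A x) = complex_of_real (l j) * cinner (e j) x"
      using positive_op_selfadjoint[OF posA, of "e j" x] e_eigen[of j]
      by (simp add: support_def cinner_scaleR_left)
    then show ?thesis using True by (simp add: butterfly_def scaleR_scaleC scaleC_scaleC)
  next
    case False then have "l j = 0" using l_nonneg[of j] by (simp add: support_def)
    then show ?thesis using False by simp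
  qed
  then show "(\<lambda>j. if j \<in> support then scaleC (cinner (e j) (A x)) (e j) else 0) sums A x"
    using A_series[of x] by simp
qed

lemma supp_proj_e: "j \<in> support \<Longrightarrow> supp_proj (e j) = e j"
  unfolding supp_proj_def by (rule ee.transfer_basis)

lemma range_supp_proj: "range supp_proj = closure (range A)"
proof
  show "range supp_proj \<subseteq> closure (range A)"
  proof
    fix z assume "z \<in> range supp_proj"
    then obtain x where z: "z = supp_proj x" by blast
    define p where "p n = (\<Sum>j<n. if j \<in> support then scaleC (cinner (e j) x) (e j) else 0)" for n
    have pl: "p \<longlonglongrightarrow> z" using ee.transfer_sums[of x] unfolding sums_def p_def z supp_proj_def .
    have "p n \<in> range A" for n
    proof -
      have "A (\<Sum>j<n. if j \<in> support then scaleC (cinner (e j) x / complex_of_real (l j)) (e j) else 0) = p n"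
        unfolding p_def using positive_opD(1)[OF posA]
      proof (simp add: bounded_clinear_sum, intro sum.cong refl)
        fix j
        show "A (if j \<in> support then scaleC (cinner (e j) x / complex_of_real (l j)) (e j) else 0) =
              (if j \<in> support then scaleC (cinner (e j) x) (e j) else 0)"
          using bounded_clinear_zero[OF positive_opD(1)[OF posA]] bounded_clinearD(2)[OF positive_opD(1)[OF posA]] e_eigen[of j]
          by (auto simp: support_def scaleR_scaleC scaleC_scaleC)
      qed
      then show ?thesis by (metis rangeI)
    qed
    then show "z \<in> closure (range A)" using pl closure_sequential by blast
  qed
  show "closure (range A) \<subseteq> range supp_proj"
  proof (rule closure_minimal)
    show "range A \<subseteq> range supp_proj" using supp_proj_A by (metis image_subsetI rangeI)
    have "range supp_proj = {x. supp_proj x = x}"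
      using supp_proj_idem by (auto intro: range_eqI[of _ supp_proj, OF sym])
    moreover have "closed {x. supp_proj x = x}"
      by (rule closed_Collect_eq[OF linear_continuous_on[OF bounded_clinear_bounded_linear[OF bounded_clinear_supp_proj]] continuous_on_id])
    ultimately show "closed (range supp_proj)" by simp
  qed
qed

lemma range_proj_eq_supp_proj: "range_proj A = supp_proj"
  unfolding range_proj_def
proof (rule the_equality)
  show "projection_op supp_proj \<and> range supp_proj = closure (range A)" using projection_op_supp_proj range_supp_proj by blast
  fix R assume "projection_op R \<and> range R = closure (range A)"
  then show "R = supp_proj" using projection_op_eqI[of R supp_proj] projection_op_supp_proj range_supp_proj by auto
qed

end

lemma bounded_clinear_butterfly_adjoint:
  assumes V: "bounded_clinear V" and adj: "\<And>x y. cinner (V x) y = cinner x (S y)"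
  shows "V (butterfly p (S y)) = butterfly (V p) y"
  unfolding butterfly_def using adj[of p y] by (simp add: bounded_clinearD(2)[OF V])

lemma sums_butterfly_adjoint:
  assumes V: "bounded_clinear V" and adj: "\<And>x y. cinner (V x) y = cinner x (S y)"
    and series: "\<And>x. (\<lambda>j. scaleR (w j) (butterfly (p j) x)) sums A x"
  shows "(\<lambda>j. scaleR (w j) (butterfly (V (p j)) y)) sums V (A (S y))"
  using bounded_clinear_sums[OF V series[of "S y"]]
  by (simp add: bounded_clinear_scaleR[OF V] bounded_clinear_butterfly_adjoint[OF V adj])

lemma AdmE:
  assumes "xi \<in> Adm T"
  obtains p where "\<And>j. xi j \<ge> 0" and "bounded (range xi)" and "\<And>j. norm (p j) = 1"
    and "\<And>x. (\<lambda>j. scaleR (xi j) (butterfly (p j) x)) sums T x"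
proof -
  obtain Q where xi: "\<forall>j. xi j \<ge> 0" "bounded (range xi)" and Q: "\<forall>j. rank_one_projection (Q j)"
    and series: "\<forall>x. (\<lambda>j. scaleR (xi j) (Q j x)) sums T x"
    using assms unfolding Adm_def by blast
  have "\<forall>j. \<exists>p. norm p = 1 \<and> Q j = butterfly p" using rank_one_projection_ex_butterfly Q by blast
  then obtain p where p: "\<And>j. norm (p j) = 1" "\<And>j. Q j = butterfly (p j)" by metis
  show ?thesis using that[of p] xi p series by simp
qed

lemma AdmI:
  assumes "\<And>j. xi j \<ge> 0" and "bounded (range xi)" and "\<And>j. norm (p j) = 1"
    and "\<And>x. (\<lambda>j. scaleR (xi j) (butterfly (p j) x)) sums T x"
  shows "xi \<in> Adm T"
  unfolding Adm_def using assms rank_one_projection_butterfly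
  by (intro CollectI conjI exI[of _ "\<lambda>j. butterfly (p j)"]) auto

locale isospectral = a: eigen_decomposed A l e + b: eigen_decomposed B l g
  for A B :: "'a::chilbert \<Rightarrow> 'a" and l :: "nat \<Rightarrow> real" and e g :: "nat \<Rightarrow> 'a"
begin

definition "V = transfer e g a.support"
definition "S = transfer g e a.support"

lemma support_eq: "b.support = a.support" by (simp add: a.support_def b.support_def)

sublocale eg: orthonormal_pair e g a.support
  using a.e_orthonormal b.e_orthonormal support_eq by unfold_locales auto
sublocale ge: orthonormal_pair g e a.support
  using a.e_orthonormal b.e_orthonormal support_eq by unfold_locales auto

lemma bounded_clinear_V: "bounded_clinear V" unfolding V_def by (rule eg.bounded_clinear_transfer)

lemma V_adj: "cinner (V x) y = cinner x (S y)" unfolding V_def S_def by (rule eg.transfer_adjoint)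

lemma adj_V: "adj V = S" using adj_eqI V_adj by blast

lemma S_V: "S (V x) = a.supp_proj x"
  unfolding S_def a.supp_proj_def
  by (rule ge.transfer_eqI) (simp add: V_def eg.cinner_transfer a.ee.transfer_sums cong: if_cong)

lemma partial_isometry_V: "partial_isometry V"
  unfolding partial_isometry_def
proof (intro conjI allI impI)
  show "bounded_clinear V" by (rule bounded_clinear_V)
  fix x assume ker: "\<forall>y. V y = 0 \<longrightarrow> cinner y x = 0"
  have "V (x - a.supp_proj x) = 0"
    unfolding V_def by (rule eg.transfer_orthogonal) (simp add: cinner_diff_right a.cinner_supp_proj)
  then have "cinner (x - a.supp_proj x) x = 0" using ker by blast
  then have "cinner x x = cinner (a.supp_proj x) (a.supp_proj x)"
    by (metis a.supp_proj_idem a.supp_proj_selfadjoint cinner_diff_left eq_iff_diff_eq_0)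
  then have "Re (cinner x x) = Re (cinner (a.supp_proj x) (a.supp_proj x))" by simp
  then have "(norm x)^2 = (norm (a.supp_proj x))^2" by (simp only: Re_cinner_self)
  also have "\<dots> = (norm (V x))^2"
    unfolding a.supp_proj_def V_def by (rule sums_unique2[OF a.ee.norm_transfer_sums eg.norm_transfer_sums])
  finally show "norm (V x) = norm x" by (simp add: power2_eq_iff_nonneg)
qed

lemma B_eq_VAS: "B y = V (A (S y))"
proof -
  have "(\<lambda>j. scaleR (l j) (butterfly (V (e j)) y)) = (\<lambda>j. scaleR (l j) (butterfly (g j) y))"
  proof
    fix j show "scaleR (l j) (butterfly (V (e j)) y) = scaleR (l j) (butterfly (g j) y)"
    proof (cases "j \<in> a.support")
      case True then show ?thesis by (simp add: V_def eg.transfer_basis)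
    next
      case False then show ?thesis using a.l_nonneg[of j] by (simp add: a.support_def)
    qed
  qed
  then have "(\<lambda>j. scaleR (l j) (butterfly (g j) y)) sums V (A (S y))"
    using sums_butterfly_adjoint[OF bounded_clinear_V V_adj a.A_series, where y=y] by simp
  then show ?thesis by (rule sums_unique2[OF b.A_series])
qed

lemma mvn_equiv_AB: "mvn_equiv A B"
  unfolding mvn_equiv_def
proof (intro exI conjI)
  show "partial_isometry V" by (rule partial_isometry_V)
  have VV: "adj V \<circ> V = a.supp_proj" using adj_V S_V by (auto simp: o_def)
  have "positive_op (\<lambda>x::'a. 0)"
    unfolding positive_op_def bounded_clinear_def by (auto intro: exI[of _ 0])
  then show "op_le (range_proj A) (adj V \<circ> V)"
    unfolding op_le_def a.range_proj_eq_supp_proj VV by simp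
  show "B = V \<circ> A \<circ> adj V" using B_eq_VAS adj_V by (auto simp: o_def)
qed

lemma Adm_subset: "Adm A \<subseteq> Adm B"
proof
  fix xi assume "xi \<in> Adm A"
  then obtain p where xi_nonneg: "\<And>j. xi j \<ge> 0" and bounded: "bounded (range xi)"
    and p_norm: "\<And>j. norm (p j) = 1" and series: "\<And>x. (\<lambda>j. scaleR (xi j) (butterfly (p j) x)) sums A x"
    using AdmE by metis
  interpret k: majorization A l e xi p using a.decomp xi_nonneg p_norm series by unfold_locales
  define h where "h j = (if xi j > 0 then V (p j) else g 0)" for j
  have h_norm: "norm (h j) = 1" for j
  proof (cases "xi j > 0")
    case True
    have "(norm (V (p j)))^2 = 1"
      unfolding V_def using k.coefficients_sums_one[OF True]
      by (intro sums_unique2[OF eg.norm_transfer_sums]) (simp add: k.support_def a.support_def)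
    then have "norm (V (p j)) = 1" by (metis norm_ge_zero real_sqrt_abs real_sqrt_one abs_of_nonneg)
    then show ?thesis using True by (simp add: h_def)
  next
    case False then show ?thesis using b.e_norm by (simp add: h_def)
  qed
  have "(\<lambda>j. scaleR (xi j) (butterfly (h j) y)) sums B y" for y
  proof -
    have "(\<lambda>j. scaleR (xi j) (butterfly (V (p j)) y)) = (\<lambda>j. scaleR (xi j) (butterfly (h j) y))"
      using xi_nonneg by (auto simp: h_def fun_eq_iff less_le)
    then show ?thesis
      using sums_butterfly_adjoint[OF bounded_clinear_V V_adj series, where y=y] by (simp add: B_eq_VAS)
  qed
  then show "xi \<in> Adm B" by (rule AdmI[OF xi_nonneg bounded h_norm])
qed

end

section \<open>Murray--von Neumann equivalence preserves the eigenvalue sequence\<close>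

locale mvn_transport = eigen_decomposed A l e
  for A :: "'a::chilbert \<Rightarrow> 'a" and l e +
  fixes B V :: "'a \<Rightarrow> 'a" and u :: 'a
  assumes pi: "partial_isometry V" and ole: "op_le (range_proj A) (adj V \<circ> V)"
    and B_eq: "B = V \<circ> A \<circ> adj V" and u: "norm u = 1"
begin

lemma bounded_clinear_V: "bounded_clinear V" using pi unfolding partial_isometry_def by blast

lemma cinner_adj_V: "cinner (V x) y = cinner x (adj V y)" by (rule cinner_adj[OF bounded_clinear_V])

lemma adj_V_zero: "adj V 0 = 0"
  by (rule cinner_ext_left) (metis cinner_adj_V bounded_clinear_zero[OF bounded_clinear_V] cinner_zero_right)

text \<open>\<open>0 \<le> \<langle>y, (V\<^sup>*V - R\<^sub>A) y\<rangle> = -\<parallel>R\<^sub>A y\<parallel>\<^sup>2\<close> whenever \<open>V y = 0\<close>.\<close>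
lemma supp_proj_kernel: "V y = 0 \<Longrightarrow> supp_proj y = 0"
proof -
  assume Vy: "V y = 0"
  have "positive_op (\<lambda>x. (adj V \<circ> V) x - supp_proj x)" using ole unfolding op_le_def range_proj_eq_supp_proj .
  then have "0 \<le> Re (cinner y (adj V (V y) - supp_proj y))" unfolding positive_op_def by simp
  then have "0 \<le> - Re (cinner y (supp_proj y))" by (simp add: Vy adj_V_zero cinner_diff_right)
  moreover have "cinner y (supp_proj y) = cinner (supp_proj y) (supp_proj y)" by (metis supp_proj_idem supp_proj_selfadjoint)
  ultimately have "(norm (supp_proj y))^2 \<le> 0" by (simp add: Re_cinner_self)
  then show "supp_proj y = 0" by simp
qed

lemma norm_V_support: "supp_proj x = x \<Longrightarrow> norm (V x) = norm x"
proof -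
  assume Rx: "supp_proj x = x"
  have "\<forall>y. V y = 0 \<longrightarrow> cinner y x = 0"
  proof (intro allI impI)
    fix y assume "V y = 0"
    then have "supp_proj y = 0" by (rule supp_proj_kernel)
    then show "cinner y x = 0" using supp_proj_selfadjoint[of y x] Rx by simp
  qed
  then show ?thesis using pi unfolding partial_isometry_def by blast
qed

lemma supp_proj_add_scaleC: "supp_proj (x + scaleC c y) = supp_proj x + scaleC c (supp_proj y)"
  using bounded_clinearD[OF bounded_clinear_supp_proj] by simp

lemma norm_V_e: "j \<in> support \<Longrightarrow> norm (V (e j)) = 1"
  using norm_V_support[OF supp_proj_e] e_norm by simp

text \<open>By polarization, an isometry on the span of the \<open>e\<^sub>j\<close> preserves their orthogonality.\<close>
lemma V_e_orthogonal:
  assumes i: "i \<in> support" and j: "j \<in> support" and ij: "i \<noteq> j"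
  shows "cinner (V (e i)) (V (e j)) = 0"
proof -
  have eij: "cinner (e i) (e j) = 0" using e_orthonormal i j ij unfolding orthonormal_on_def by blast
  have gen: "Re (c * cinner (V (e i)) (V (e j))) = 0" for c
  proof -
    have "supp_proj (e i + scaleC c (e j)) = e i + scaleC c (e j)" using supp_proj_add_scaleC supp_proj_e i j by simp
    then have "norm (V (e i + scaleC c (e j))) = norm (e i + scaleC c (e j))" by (rule norm_V_support)
    then have "(norm (V (e i) + scaleC c (V (e j))))^2 = (norm (e i + scaleC c (e j)))^2"
      by (simp add: bounded_clinearD[OF bounded_clinear_V])
    then show ?thesis
      using norm_V_e[OF i] norm_V_e[OF j] e_norm[of i] e_norm[of j] eij
      by (simp add: norm_add_sq norm_scaleC cinner_scaleC_right)
  qed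
  have "Re (cinner (V (e i)) (V (e j))) = 0" using gen[of 1] by simp
  moreover have "Im (cinner (V (e i)) (V (e j))) = 0" using gen[of "\<i>"] by simp
  ultimately show ?thesis by (simp add: complex_eq_iff)
qed

definition "g j = (if l j > 0 then V (e j) else u)"

lemma g_norm: "norm (g j) = 1" using norm_V_e u by (simp add: g_def support_def)

lemma g_orthogonal: "i \<noteq> j \<Longrightarrow> l i > 0 \<Longrightarrow> l j > 0 \<Longrightarrow> cinner (g i) (g j) = 0"
  using V_e_orthogonal by (simp add: g_def support_def)

lemma B_series: "(\<lambda>j. scaleR (l j) (butterfly (g j) y)) sums B y"
proof -
  have "(\<lambda>j. scaleR (l j) (butterfly (V (e j)) y)) = (\<lambda>j. scaleR (l j) (butterfly (g j) y))"
    using l_nonneg by (auto simp: g_def fun_eq_iff less_le)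
  then show ?thesis
    using sums_butterfly_adjoint[OF bounded_clinear_V cinner_adj_V A_series, where y=y] by (simp add: B_eq)
qed

lemma g_eigen:
  assumes k: "l k > 0" shows "B (g k) = scaleR (l k) (g k)"
proof -
  have "(\<lambda>j. scaleR (l j) (butterfly (g j) (g k))) = (\<lambda>j. if j = k then scaleR (l j) (g j) else 0)"
  proof
    fix j show "scaleR (l j) (butterfly (g j) (g k)) = (if j = k then scaleR (l j) (g j) else 0)"
    proof (cases "j = k")
      case True then show ?thesis using g_norm[of k] by (simp add: butterfly_def cinner_self_norm scaleC_one)
    next
      case False then show ?thesis
        using g_orthogonal[OF False _ k] l_nonneg[of j] by (cases "l j > 0") (auto simp: butterfly_def)
    qed
  qed
  then have "(\<lambda>j. if j = k then scaleR (l j) (g j) else 0) sums B (g k)" using B_series[of "g k"] by simp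
  from sums_unique2[OF this sums_single] show ?thesis by simp
qed

lemma eigen_decomp_B: "eigen_decomp B l g"
  using decomp g_norm g_orthogonal g_eigen B_series unfolding eigen_decomp_def by blast

end

lemma mvn_equiv_eigen_decomp:
  fixes A B :: "'a::chilbert \<Rightarrow> 'a"
  assumes "eigen_decomp A l e" and "positive_op A" and "mvn_equiv A B" and "norm (u::'a) = 1"
  obtains g where "eigen_decomp B l g"
proof -
  obtain V where "partial_isometry V" "op_le (range_proj A) (adj V \<circ> V)" "B = V \<circ> A \<circ> adj V"
    using assms(3) unfolding mvn_equiv_def by blast
  then interpret mvn_transport A l e B V u using assms by unfold_locales
  show ?thesis using eigen_decomp_B by (rule that)
qed

section \<open>Admissible sequences determine the eigenvalue sequence\<close>

lemma eigen_decomp_Adm: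
  assumes "eigen_decomp T l e" shows "l \<in> Adm T"
proof -
  have l: "\<And>j. l j \<ge> 0" "decseq l" and e: "\<And>j. norm (e j) = 1"
    and series: "\<And>x. (\<lambda>j. scaleR (l j) (butterfly (e j) x)) sums T x"
    using assms unfolding eigen_decomp_def by auto
  have "bounded (range l)"
    unfolding bounded_iff using l by (auto intro!: exI[of _ "l 0"] simp: decseqD)
  then show ?thesis by (rule AdmI[OF l(1) _ e series])
qed

lemma Adm_partial_sums_le:
  assumes "eigen_decomp B mu f" and "xi \<in> Adm B"
  shows "(\<Sum>j<k. xi j) \<le> (\<Sum>j<k. mu j)"
proof -
  obtain q where "\<And>j. xi j \<ge> 0" "\<And>j. norm (q j) = 1"
    "\<And>x. (\<lambda>j. scaleR (xi j) (butterfly (q j) x)) sums B x"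
    using AdmE[OF assms(2)] by metis
  then interpret majorization B mu f xi q using assms(1) by unfold_locales
  show ?thesis by (rule partial_sums_le)
qed

lemma partial_sums_eq_imp_eq:
  fixes a b :: "nat \<Rightarrow> real"
  assumes "\<And>k. (\<Sum>j<k. a j) = (\<Sum>j<k. b j)" shows "a = b"
proof
  fix j show "a j = b j" using assms[of j] assms[of "Suc j"] by simp
qed

lemma Adm_eq_imp_eigenvalues_eq:
  assumes A: "eigen_decomp A l e" and B: "eigen_decomp B mu f" and "Adm A = Adm B"
  shows "l = mu"
proof (rule partial_sums_eq_imp_eq)
  fix k
  show "(\<Sum>j<k. l j) = (\<Sum>j<k. mu j)"
    using Adm_partial_sums_le[OF B, of l] Adm_partial_sums_le[OF A, of mu]
      eigen_decomp_Adm[OF A] eigen_decomp_Adm[OF B] assms(3) by (simp add: order_antisym)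
qed

lemma isospectral_mvn_equiv_Adm_eq:
  assumes "eigen_decomp A l e" "positive_op A" "eigen_decomp B l g" "positive_op B"
  shows "mvn_equiv A B" and "Adm A = Adm B"
proof -
  interpret AB: isospectral A B l e g using assms by unfold_locales
  interpret BA: isospectral B A l g e using assms by unfold_locales
  show "mvn_equiv A B" by (rule AB.mvn_equiv_AB)
  show "Adm A = Adm B" using AB.Adm_subset BA.Adm_subset by blast
qed

lemma trivial_space_Adm_mvn_equiv:
  fixes A B :: "'a::chilbert \<Rightarrow> 'a"
  assumes "\<And>x::'a. x = 0"
  shows "Adm A = Adm B" and "mvn_equiv A B"
proof -
  show "Adm A = Adm B" unfolding Adm_def rank_one_projection_def using assms by auto
  have all_eq: "F = G" for F G :: "'a \<Rightarrow> 'a" using assms by (intro ext) metis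
  have id: "bounded_clinear (\<lambda>x::'a. x)"
    unfolding bounded_clinear_def by (intro conjI allI exI[of _ 1]) auto
  have "partial_isometry (\<lambda>x::'a. x)" unfolding partial_isometry_def using id by auto
  moreover have "positive_op (\<lambda>x::'a. x)"
    unfolding positive_op_def using id by (simp add: Im_cinner_self Re_cinner_self)
  then have "op_le (range_proj A) (adj (\<lambda>x::'a. x) \<circ> (\<lambda>x. x))"
    unfolding op_le_def using all_eq by metis
  ultimately show "mvn_equiv A B" unfolding mvn_equiv_def using all_eq by blast
qed

theorem mainTheorem4:
  fixes A B :: "'a::chilbert \<Rightarrow> 'a"
  assumes "compact_op A" and "positive_op A"
    and "compact_op B" and "positive_op B"
  shows "Adm A = Adm B \<longleftrightarrow> mvn_equiv A B"
proof (cases "\<exists>u::'a. norm u = 1")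
  case False
  then have trivial: "\<And>x::'a. x = 0" by (metis norm_sgn sgn_zero_iff)
  show ?thesis using trivial_space_Adm_mvn_equiv[OF trivial, of A B] by blast
next
  case True
  then obtain u :: 'a where u: "norm u = 1" ..
  obtain l e where A: "eigen_decomp A l e" using positive_compact_op_eigen_decomp[OF assms(2,1) u] by blast
  obtain mu f where B: "eigen_decomp B mu f" using positive_compact_op_eigen_decomp[OF assms(4,3) u] by blast
  show ?thesis
  proof
    assume "Adm A = Adm B"
    then have "eigen_decomp B l f" using Adm_eq_imp_eigenvalues_eq[OF A B] B by simp
    then show "mvn_equiv A B" by (rule isospectral_mvn_equiv_Adm_eq(1)[OF A assms(2) _ assms(4)])
  next
    assume "mvn_equiv A B"
    then obtain g where "eigen_decomp B l g" by (rule mvn_equiv_eigen_decomp[OF A assms(2) _ u])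
    then show "Adm A = Adm B" by (rule isospectral_mvn_equiv_Adm_eq(2)[OF A assms(2) _ assms(4)])
  qed
qed

end
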